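(* Let $A\subset\mathcal X$ be nonempty and $x\in\mathcal X\setminus A$. For every $\varepsilon>0$ there exists $\kappa>0$ such that for all $\beta$ sufficiently large $$\mathbb P\big(\tau^x_A<e^{\beta(\Psi_{\min}(x,A)-\varepsilon)}\big)<e^{-\kappa\beta}\quad\text{and}\quad \mathbb P\big(\tau^x_A>e^{\beta(\Psi_{\max}(x,A)+\varepsilon)}\big)<e^{-\kappa\beta}.$$
   Context: Setting: $\mathcal X$ is a finite set, $H:\mathcal X\to\mathbb R$ a non-constant function, $q:\mathcal X\times\mathcal X\to[0,1]$ a stochastic, symmetric, irreducible matrix. A path is a finite sequence $\omega=(\omega_1,\dots,\omega_n)$ with $q(\omega_i,\omega_{i+1})>0$ for all $i$ (length $|\omega|=n$, $n=1$ allowed); $\omega:x\to y$ means $\omega_1=x,\omega_n=y$; irreducibility means such a path exists for all $x,y$. For $\beta>0$ the Metropolis chain $(X_t)$ has $P_\beta(x,y)=q(x,y)e^{-\beta[H(y)-H(x)]^+}$ ($x\neq y$), $P_\beta(x,x)=1-\sum_{z\neq x}P_\beta(x,z)$; $\tau^x_A=\inf\{t>0:X_t\in A\}$ for the chain started at $x$. Height $\Phi_\omega=\max_iH(\omega_i)$; $\Phi(x,y)=\min_{\omega:x\to y}\Phi_\omega$; $\Phi(B,D)=\min_{x\in B,y\in D}\Phi(x,y)$, $\Phi(x,A)=\Phi(\{x\},A)$. $\Omega_{x,A}$ = set of paths $\omega:x\to y$ with $y\in A$ and $\omega_i\notin A$ for $i<|\omega|$. A set with at least two elements is connected if any two of its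 elements are joined by a path lying in it. $\partial B=\{y\notin B:\exists x\in B,\ q(x,y)>0\}$; $\mathcal F(B)$ = set of minimizers of $H$ on $B$, and $H(\mathcal F(B))$ the minimum value. A cycle is a nonempty $C\subset\mathcal X$ that is either a singleton or a connected set with $\max_{z\in C}H(z)<H(\mathcal F(\partial C))$; its depth is $\Gamma(C)=\Phi(C,\mathcal X\setminus C)-H(\mathcal F(C))$. Initial cycle: $C_A(x)=\{x\}\cup\{z:\Phi(x,z)<\Phi(x,A)\}$, and $\Gamma(z,A)=\Gamma(C_A(z))$ (this is $0$ for $z\in A$). Convention: $A$ is assumed to contain every state $y$ such that every path from $x$ to $y$ meets $A$. Optimal paths: $\Omega^{\rm opt}_{x,A}=\{\omega\in\Omega_{x,A}:\Phi_\omega=\Phi(x,A)\}$. Define $\Psi_{\min}(x,A)=\min_{\omega\in\Omega^{\rm opt}_{x,A}}\max_{z\in\omega}\Gamma(z,A)$ and $\Psi_{\max}(x,A)=\max_{\omega\in\Omega^{\rm opt}_{x,A}}\max_{z\in\omega}\Gamma(z,A)$. *)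

theory Defs
  imports Complex_Main
begin

definition is_path :: "('a \<Rightarrow> 'a \<Rightarrow> real) \<Rightarrow> 'a list \<Rightarrow> bool" where
  "is_path q \<omega> \<longleftrightarrow> \<omega> \<noteq> [] \<and> (\<forall>i. Suc i < length \<omega> \<longrightarrow> q (\<omega> ! i) (\<omega> ! Suc i) > 0)"

definition path_from_to :: "('a \<Rightarrow> 'a \<Rightarrow> real) \<Rightarrow> 'a list \<Rightarrow> 'a \<Rightarrow> 'a \<Rightarrow> bool" where
  "path_from_to q \<omega> x y \<longleftrightarrow> is_path q \<omega> \<and> hd \<omega> = x \<and> last \<omega> = y"

definition path_height :: "('a \<Rightarrow> real) \<Rightarrow> 'a list \<Rightarrow> real" where
  "path_height H \<omega> = Max (H ` set \<omega>)"

definition comm_height :: "('a \<Rightarrow> real) \<Rightarrow> ('a \<Rightarrow> 'a \<Rightarrow> real) \<Rightarrow> 'a \<Rightarrow> 'a \<Rightarrow> real" where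
  "comm_height H q x y = Min {path_height H \<omega> | \<omega>. path_from_to q \<omega> x y}"

definition comm_height_set :: "('a \<Rightarrow> real) \<Rightarrow> ('a \<Rightarrow> 'a \<Rightarrow> real) \<Rightarrow> 'a set \<Rightarrow> 'a set \<Rightarrow> real" where
  "comm_height_set H q B D = Min {comm_height H q x y | x y. x \<in> B \<and> y \<in> D}"

definition initial_cycle :: "('a \<Rightarrow> real) \<Rightarrow> ('a \<Rightarrow> 'a \<Rightarrow> real) \<Rightarrow> 'a set \<Rightarrow> 'a \<Rightarrow> 'a set" where
  "initial_cycle H q A x = {x} \<union> {z. comm_height H q x z < comm_height_set H q {x} A}"

definition depth :: "('a \<Rightarrow> real) \<Rightarrow> ('a \<Rightarrow> 'a \<Rightarrow> real) \<Rightarrow> 'a set \<Rightarrow> real" where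
  "depth H q C = comm_height_set H q C (- C) - Min (H ` C)"

text \<open>\<open>\<Gamma>(z,A) = \<Gamma>(C_A(z))\<close>, with the paper's convention that it is 0 for \<open>z \<in> A\<close>.\<close>
definition Gamma :: "('a \<Rightarrow> real) \<Rightarrow> ('a \<Rightarrow> 'a \<Rightarrow> real) \<Rightarrow> 'a \<Rightarrow> 'a set \<Rightarrow> real" where
  "Gamma H q z A = (if z \<in> A then 0 else depth H q (initial_cycle H q A z))"

definition first_hit_paths :: "('a \<Rightarrow> 'a \<Rightarrow> real) \<Rightarrow> 'a \<Rightarrow> 'a set \<Rightarrow> 'a list set" where
  "first_hit_paths q x A =
     {\<omega>. is_path q \<omega> \<and> hd \<omega> = x \<and> last \<omega> \<in> A \<and> (\<forall>i. Suc i < length \<omega> \<longrightarrow> \<omega> ! i \<notin> A)}"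

definition opt_paths :: "('a \<Rightarrow> real) \<Rightarrow> ('a \<Rightarrow> 'a \<Rightarrow> real) \<Rightarrow> 'a \<Rightarrow> 'a set \<Rightarrow> 'a list set" where
  "opt_paths H q x A =
     {\<omega> \<in> first_hit_paths q x A. path_height H \<omega> = comm_height_set H q {x} A}"

definition Psi_min :: "('a \<Rightarrow> real) \<Rightarrow> ('a \<Rightarrow> 'a \<Rightarrow> real) \<Rightarrow> 'a \<Rightarrow> 'a set \<Rightarrow> real" where
  "Psi_min H q x A = Min ((\<lambda>\<omega>. Max ((\<lambda>z. Gamma H q z A) ` set \<omega>)) ` opt_paths H q x A)"

definition Psi_max :: "('a \<Rightarrow> real) \<Rightarrow> ('a \<Rightarrow> 'a \<Rightarrow> real) \<Rightarrow> 'a \<Rightarrow> 'a set \<Rightarrow> real" where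
  "Psi_max H q x A = Max ((\<lambda>\<omega>. Max ((\<lambda>z. Gamma H q z A) ` set \<omega>)) ` opt_paths H q x A)"

definition metro :: "('a::finite \<Rightarrow> real) \<Rightarrow> ('a \<Rightarrow> 'a \<Rightarrow> real) \<Rightarrow> real \<Rightarrow> 'a \<Rightarrow> 'a \<Rightarrow> real" where
  "metro H q \<beta> x y =
     (if x = y then 1 - (\<Sum>z\<in>UNIV - {x}. q x z * exp (- \<beta> * max 0 (H z - H x)))
      else q x y * exp (- \<beta> * max 0 (H y - H x)))"

text \<open>\<open>hit_le H q \<beta> A n x\<close> is \<open>P(\<tau>^x_A \<le> n)\<close> for the Metropolis chain started at \<open>x\<close>,
  where \<open>\<tau>^x_A = inf {t > 0. X_t \<in> A}\<close> (first-step decomposition).\<close>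
fun hit_le :: "('a::finite \<Rightarrow> real) \<Rightarrow> ('a \<Rightarrow> 'a \<Rightarrow> real) \<Rightarrow> real \<Rightarrow> 'a set \<Rightarrow> nat \<Rightarrow> 'a \<Rightarrow> real" where
  "hit_le H q \<beta> A 0 x = 0"
| "hit_le H q \<beta> A (Suc n) x =
     (\<Sum>y\<in>UNIV. metro H q \<beta> x y * (if y \<in> A then 1 else hit_le H q \<beta> A n y))"

text \<open>\<open>P(\<tau>^x_A < T)\<close> for real \<open>T > 0\<close>: since \<open>\<tau>\<close> is a positive integer, \<open>\<tau> < T \<longleftrightarrow> \<tau> \<le> \<lceil>T\<rceil> - 1\<close>.\<close>
definition prob_hit_before :: "('a::finite \<Rightarrow> real) \<Rightarrow> ('a \<Rightarrow> 'a \<Rightarrow> real) \<Rightarrow> real \<Rightarrow> 'a set \<Rightarrow> 'a \<Rightarrow> real \<Rightarrow> real" where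
  "prob_hit_before H q \<beta> A x T = hit_le H q \<beta> A (nat (\<lceil>T\<rceil> - 1)) x"

text \<open>\<open>P(\<tau>^x_A > T)\<close> for real \<open>T \<ge> 0\<close>: \<open>\<tau> > T \<longleftrightarrow> \<not> \<tau> \<le> \<lfloor>T\<rfloor>\<close> (includes \<open>\<tau> = \<infinity>\<close>).\<close>
definition prob_hit_after :: "('a::finite \<Rightarrow> real) \<Rightarrow> ('a \<Rightarrow> 'a \<Rightarrow> real) \<Rightarrow> real \<Rightarrow> 'a set \<Rightarrow> 'a \<Rightarrow> real \<Rightarrow> real" where
  "prob_hit_after H q \<beta> A x T = 1 - hit_le H q \<beta> A (nat \<lfloor>T\<rfloor>) x"

end

(*
  Let Phi_x = Phi(x, A) and let the basin be the set of states that x reaches along paths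
  avoiding A and staying below Phi_x. For the reversible Metropolis chain, the probability of
  crossing an energy level S before reaching a set reachable along a path of height h is
  O(exp (- beta * (S - h))): by renewal it is bounded by the flux across the level divided by
  a capacity, and the Dirichlet principle bounds the capacity from below along the path.
  Hence the chain leaves the basin through the low part of A, up to exponentially small error.

  Lower bound: a route from x to A inside the basin that avoids all states z with
  Gamma(z, A) >= Psi_min would be an optimal path along which every depth is below Psi_min.
  So the chain must first leave the initial cycle of such a deep state z, which by time n has
  probability at most n * exp (- beta * Gamma(z, A)) plus an exponentially small error.

  Upper bound: every state w of the basin lies on an optimal path, so its escape probability
  out of the basin is of order at least exp (- beta * Gamma(w, A)) >= exp (- beta * Psi_max).
  The expected exit time from the basin is the sum over its states of the expected numbers
  of visits, each at most the inverse escape probability; Markov's inequality concludes.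
*)
theory Submission
  imports Defs
begin

section \<open>Paths\<close>

lemma is_path_singleton [simp]: "is_path P [a]"
  by (simp add: is_path_def)

lemma is_path_Cons_Cons: "is_path P (a # b # \<omega>) \<longleftrightarrow> P a b > 0 \<and> is_path P (b # \<omega>)"
proof
  assume "is_path P (a # b # \<omega>)"
  then show "P a b > 0 \<and> is_path P (b # \<omega>)"
    unfolding is_path_def by (metis Suc_less_eq length_Cons nth_Cons_0 nth_Cons_Suc zero_less_Suc list.distinct(1))
next
  assume "P a b > 0 \<and> is_path P (b # \<omega>)"
  then show "is_path P (a # b # \<omega>)"
    unfolding is_path_def by (auto simp: nth_Cons split: nat.split)
qed

lemma is_path_Cons: "is_path P (a # \<omega>) \<longleftrightarrow> \<omega> = [] \<or> (P a (hd \<omega>) > 0 \<and> is_path P \<omega>)"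
  by (cases \<omega>) (auto simp: is_path_Cons_Cons)

lemma is_path_nonempty: "is_path P \<omega> \<Longrightarrow> \<omega> \<noteq> []"
  by (simp add: is_path_def)

lemma is_path_append:
  assumes "is_path P \<omega>1" "is_path P \<omega>2" "P (last \<omega>1) (hd \<omega>2) > 0"
  shows "is_path P (\<omega>1 @ \<omega>2)"
  using assms
proof (induction \<omega>1)
  case Nil
  then show ?case by (simp add: is_path_def)
next
  case (Cons a \<omega>1)
  then show ?case
    by (cases "\<omega>1 = []") (auto simp: is_path_Cons)
qed

lemma is_path_join:
  assumes "is_path P \<omega>1" "is_path P \<omega>2" "last \<omega>1 = hd \<omega>2"
  shows "is_path P (\<omega>1 @ tl \<omega>2)"
proof (cases "tl \<omega>2 = []")
  case False
  with assms(2) have "P (hd \<omega>2) (hd (tl \<omega>2)) > 0 \<and> is_path P (tl \<omega>2)"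
    by (metis is_path_Cons is_path_nonempty list.collapse)
  with assms show ?thesis by (intro is_path_append) auto
qed (use assms in simp)

lemma is_path_rev:
  assumes "\<And>u v. P u v = P v u" "is_path P \<omega>"
  shows "is_path P (rev \<omega>)"
  using assms(2)
proof (induction \<omega>)
  case (Cons a \<omega>)
  show ?case
  proof (cases "\<omega> = []")
    case False
    with Cons.prems have "is_path P \<omega>" "P a (hd \<omega>) > 0" by (auto simp: is_path_Cons)
    with Cons.IH False assms(1) have "is_path P (rev \<omega> @ [a])"
      by (intro is_path_append) (auto simp: last_rev)
    then show ?thesis by simp
  qed simp
qed (simp add: is_path_def)

lemma is_path_take: "is_path P \<omega> \<Longrightarrow> 0 < j \<Longrightarrow> is_path P (take j \<omega>)"
  unfolding is_path_def by (auto simp: nth_take)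

lemma path_from_to_nonempty: "path_from_to P \<omega> a b \<Longrightarrow> \<omega> \<noteq> []"
  by (simp add: path_from_to_def is_path_def)

lemma path_from_to_join:
  assumes "path_from_to P \<omega>1 a b" "path_from_to P \<omega>2 b c"
  shows "path_from_to P (\<omega>1 @ tl \<omega>2) a c" "set (\<omega>1 @ tl \<omega>2) \<subseteq> set \<omega>1 \<union> set \<omega>2"
proof -
  have ne: "\<omega>1 \<noteq> []" "\<omega>2 \<noteq> []" using assms by (auto dest: path_from_to_nonempty)
  have "last (\<omega>1 @ tl \<omega>2) = c"
    using assms ne unfolding path_from_to_def
    by (cases "tl \<omega>2 = []") (auto simp: last_tl, metis last_ConsL list.collapse)
  then show "path_from_to P (\<omega>1 @ tl \<omega>2) a c"
    using assms ne is_path_join[of P \<omega>1 \<omega>2] unfolding path_from_to_def by auto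
  show "set (\<omega>1 @ tl \<omega>2) \<subseteq> set \<omega>1 \<union> set \<omega>2"
    using ne by (auto simp: list.set_sel(2))
qed

lemma set_butlast_disjoint_iff:
  "(\<forall>i. Suc i < length \<omega> \<longrightarrow> \<omega> ! i \<notin> A) \<longleftrightarrow> set (butlast \<omega>) \<inter> A = {}"
proof
  assume "\<forall>i. Suc i < length \<omega> \<longrightarrow> \<omega> ! i \<notin> A"
  then show "set (butlast \<omega>) \<inter> A = {}" by (fastforce simp: in_set_conv_nth nth_butlast)
next
  assume disj: "set (butlast \<omega>) \<inter> A = {}"
  show "\<forall>i. Suc i < length \<omega> \<longrightarrow> \<omega> ! i \<notin> A"
  proof (intro allI impI)
    fix i assume "Suc i < length \<omega>"
    then have "\<omega> ! i = butlast \<omega> ! i" "butlast \<omega> ! i \<in> set (butlast \<omega>)"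
      by (simp add: nth_butlast, intro nth_mem, simp)
    with disj show "\<omega> ! i \<notin> A" by auto
  qed
qed

lemma first_hit_paths_iff:
  "\<omega> \<in> first_hit_paths P x A \<longleftrightarrow>
     is_path P \<omega> \<and> hd \<omega> = x \<and> last \<omega> \<in> A \<and> set (butlast \<omega>) \<inter> A = {}"
  unfolding first_hit_paths_def set_butlast_disjoint_iff by simp

lemma path_height_ge: "a \<in> set \<omega> \<Longrightarrow> H a \<le> path_height H \<omega>"
  unfolding path_height_def by (rule Max_ge) auto

lemma path_height_in: "\<omega> \<noteq> [] \<Longrightarrow> path_height H \<omega> \<in> H ` set \<omega>"
  unfolding path_height_def by (rule Max_in) auto

lemma path_height_le: "\<omega> \<noteq> [] \<Longrightarrow> (\<And>a. a \<in> set \<omega> \<Longrightarrow> H a \<le> c) \<Longrightarrow> path_height H \<omega> \<le> c"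
  unfolding path_height_def by (subst Max_le_iff) auto

lemma path_height_le_iff: "\<omega> \<noteq> [] \<Longrightarrow> path_height H \<omega> \<le> c \<longleftrightarrow> (\<forall>a\<in>set \<omega>. H a \<le> c)"
  using path_height_ge path_height_le by (metis order_trans)

lemma path_height_singleton [simp]: "path_height H [a] = H a"
  unfolding path_height_def by simp

lemma path_height_pair: "path_height H [a, b] = max (H a) (H b)"
  unfolding path_height_def by (simp add: max.commute)

lemma path_height_append_tl_le:
  "\<omega>1 \<noteq> [] \<Longrightarrow> \<omega>2 \<noteq> [] \<Longrightarrow>
     path_height H (\<omega>1 @ tl \<omega>2) \<le> max (path_height H \<omega>1) (path_height H \<omega>2)"
  by (rule path_height_le)
     (auto intro: max.coboundedI1 max.coboundedI2 path_height_ge list.set_sel(2))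

lemma first_hit_path_within:
  assumes "is_path P (\<omega>1 @ \<omega>2)" "hd (\<omega>1 @ \<omega>2) = x" "\<exists>a\<in>set \<omega>2. a \<in> A" "set \<omega>1 \<inter> A = {}"
  obtains \<omega> where "\<omega> \<in> first_hit_paths P x A" "set \<omega>1 \<subseteq> set \<omega>" "set \<omega> \<subseteq> set (\<omega>1 @ \<omega>2)"
proof -
  obtain ys a zs where \<omega>2: "\<omega>2 = ys @ a # zs" "a \<in> A" "\<forall>y\<in>set ys. y \<notin> A"
    using split_list_first_prop[OF assms(3)] by blast
  have "take (length \<omega>1 + length ys + 1) (\<omega>1 @ \<omega>2) = \<omega>1 @ ys @ [a]"
    by (simp add: \<omega>2)
  then have "is_path P (\<omega>1 @ ys @ [a])"
    using is_path_take[OF assms(1), of "length \<omega>1 + length ys + 1"] by simp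
  moreover have "hd (\<omega>1 @ ys @ [a]) = x" using assms(2) by (cases ys) (auto simp: \<omega>2 hd_append)
  moreover have "set (butlast (\<omega>1 @ ys @ [a])) \<inter> A = {}"
    using assms(4) \<omega>2(3) by (auto simp: butlast_append)
  ultimately have "\<omega>1 @ ys @ [a] \<in> first_hit_paths P x A"
    using \<omega>2(2) by (simp add: first_hit_paths_iff)
  then show ?thesis by (rule that) (auto simp: \<omega>2)
qed

section \<open>Hitting probabilities of a finite Markov chain\<close>

text \<open>\<open>hit P E F n y\<close> is the probability that the chain with transition matrix \<open>P\<close> started at \<open>y\<close>
  enters \<open>E\<close> at some time \<open>1, \<dots>, n\<close> before entering \<open>F\<close>; a visit to \<open>E \<inter> F\<close> counts for \<open>E\<close>.\<close>

fun hit :: "('a::finite \<Rightarrow> 'a \<Rightarrow> real) \<Rightarrow> 'a set \<Rightarrow> 'a set \<Rightarrow> nat \<Rightarrow> 'a \<Rightarrow> real" where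
  "hit P E F 0 y = 0"
| "hit P E F (Suc n) y =
     (\<Sum>w\<in>UNIV. P y w * (if w \<in> E then 1 else if w \<in> F then 0 else hit P E F n w))"

definition hit_ever :: "('a::finite \<Rightarrow> 'a \<Rightarrow> real) \<Rightarrow> 'a set \<Rightarrow> 'a set \<Rightarrow> 'a \<Rightarrow> real" where
  "hit_ever P E F y = (SUP n. hit P E F n y)"

lemma hit_eq_0_if_closed:
  assumes "y \<in> W" "W \<inter> E = {}" and closed: "\<And>u v. u \<in> W \<Longrightarrow> P u v \<noteq> 0 \<Longrightarrow> v \<in> W \<union> (F - E)"
  shows "hit P E F n y = 0"
  using assms(1)
proof (induction n arbitrary: y)
  case (Suc n)
  have "P y w * (if w \<in> E then 1 else if w \<in> F then 0 else hit P E F n w) = 0" for w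
    using closed[OF Suc.prems, of w] Suc.IH assms(2) by (cases "P y w = 0") auto
  then show ?case by (simp del: mult_eq_0_iff)
qed simp

lemma sum_UNIV_eq_sum_Compl:
  fixes f :: "'a::finite \<Rightarrow> real"
  assumes "\<And>v. v \<in> D \<Longrightarrow> f v = 0"
  shows "(\<Sum>v\<in>UNIV. f v) = (\<Sum>v\<in>-D. f v)"
  by (rule sum.mono_neutral_right) (use assms in auto)

locale stochastic_matrix =
  fixes P :: "'a::finite \<Rightarrow> 'a \<Rightarrow> real"
  assumes P_nonneg: "\<And>u v. 0 \<le> P u v"
    and P_row_sum: "\<And>u. (\<Sum>v\<in>UNIV. P u v) = 1"
begin

lemma hit_nonneg_le_one: "0 \<le> hit P E F n y \<and> hit P E F n y \<le> 1"
proof (induction n arbitrary: y)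
  case (Suc n)
  let ?g = "\<lambda>w. if w \<in> E then 1 else if w \<in> F then 0 else hit P E F n w"
  have g: "0 \<le> ?g w \<and> ?g w \<le> 1" for w using Suc by auto
  have "0 \<le> (\<Sum>w\<in>UNIV. P y w * ?g w)"
    by (intro sum_nonneg) (use g P_nonneg in auto)
  moreover have "(\<Sum>w\<in>UNIV. P y w * ?g w) \<le> (\<Sum>w\<in>UNIV. P y w)"
  proof (intro sum_mono)
    fix w show "P y w * ?g w \<le> P y w" using g[of w] P_nonneg[of y w] mult_left_le by blast
  qed
  ultimately show ?case using P_row_sum[of y] by simp
qed simp

lemma hit_nonneg: "0 \<le> hit P E F n y"
  using hit_nonneg_le_one by blast

lemma hit_le_one: "hit P E F n y \<le> 1"
  using hit_nonneg_le_one by blast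

lemma hit_le_hit_Suc: "hit P E F n y \<le> hit P E F (Suc n) y"
proof (induction n arbitrary: y)
  case 0
  then show ?case using hit_nonneg[of E F "Suc 0" y] by simp
next
  case (Suc n)
  show ?case
    unfolding hit.simps(2)[of P E F "Suc n"] hit.simps(2)[of P E F n]
    by (intro sum_mono mult_left_mono) (use Suc P_nonneg in auto)
qed

lemma incseq_hit: "incseq (\<lambda>n. hit P E F n y)"
  by (intro incseq_SucI hit_le_hit_Suc)

lemma hit_mono: "m \<le> n \<Longrightarrow> hit P E F m y \<le> hit P E F n y"
  using incseq_hit[of E F y] by (auto simp: incseq_def)

lemma hit_tendsto_hit_ever: "(\<lambda>n. hit P E F n y) \<longlonglongrightarrow> hit_ever P E F y"
  unfolding hit_ever_def
  by (rule LIMSEQ_incseq_SUP) (use incseq_hit hit_le_one in \<open>auto intro!: bdd_aboveI[where M=1]\<close>)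

lemma hit_le_hit_ever: "hit P E F n y \<le> hit_ever P E F y"
  unfolding hit_ever_def by (rule cSUP_upper) (use hit_le_one in \<open>auto intro!: bdd_aboveI[where M=1]\<close>)

lemma hit_ever_le: "(\<And>n. hit P E F n y \<le> B) \<Longrightarrow> hit_ever P E F y \<le> B"
  unfolding hit_ever_def by (rule cSUP_least) auto

lemma hit_ever_nonneg: "0 \<le> hit_ever P E F y"
  using hit_le_hit_ever[of E F 0 y] by simp

lemma hit_ever_le_one: "hit_ever P E F y \<le> 1"
  by (intro hit_ever_le hit_le_one)

lemma hit_ever_unfold:
  "hit_ever P E F y =
     (\<Sum>w\<in>UNIV. P y w * (if w \<in> E then 1 else if w \<in> F then 0 else hit_ever P E F w))"
proof -
  have "(\<lambda>n. hit P E F (Suc n) y) \<longlonglongrightarrow> hit_ever P E F y"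
    using hit_tendsto_hit_ever by (rule LIMSEQ_Suc)
  moreover have "(\<lambda>n. hit P E F (Suc n) y) \<longlonglongrightarrow>
     (\<Sum>w\<in>UNIV. P y w * (if w \<in> E then 1 else if w \<in> F then 0 else hit_ever P E F w))"
    unfolding hit.simps
    by (intro tendsto_sum tendsto_mult tendsto_const) (auto intro: hit_tendsto_hit_ever)
  ultimately show ?thesis using LIMSEQ_unique by blast
qed

lemma hit_union_target:
  assumes "E \<inter> F = {}"
  shows "hit P E (F \<union> G) n y + hit P F (E \<union> G) n y = hit P (E \<union> F) G n y"
proof (induction n arbitrary: y)
  case (Suc n)
  have "hit P E (F \<union> G) (Suc n) y + hit P F (E \<union> G) (Suc n) y =
    (\<Sum>w\<in>UNIV. P y w * (if w \<in> E then 1 else if w \<in> F \<union> G then 0 else hit P E (F \<union> G) n w)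
       + P y w * (if w \<in> F then 1 else if w \<in> E \<union> G then 0 else hit P F (E \<union> G) n w))"
    by (simp add: sum.distrib)
  also have "\<dots> = (\<Sum>w\<in>UNIV. P y w * (if w \<in> E \<union> F then 1 else if w \<in> G then 0 else hit P (E \<union> F) G n w))"
    by (intro sum.cong refl) (use assms Suc in \<open>auto simp: algebra_simps simp flip: distrib_left\<close>)
  finally show ?case by simp
qed simp

lemma hit_ever_union_target:
  assumes "E \<inter> F = {}"
  shows "hit_ever P E (F \<union> G) y + hit_ever P F (E \<union> G) y = hit_ever P (E \<union> F) G y"
proof -
  have "(\<lambda>n. hit P E (F \<union> G) n y + hit P F (E \<union> G) n y) \<longlonglongrightarrow>
      hit_ever P E (F \<union> G) y + hit_ever P F (E \<union> G) y"
    by (intro tendsto_add hit_tendsto_hit_ever)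
  then have "(\<lambda>n. hit P (E \<union> F) G n y) \<longlonglongrightarrow> hit_ever P E (F \<union> G) y + hit_ever P F (E \<union> G) y"
    using hit_union_target[OF assms] by simp
  then show ?thesis using hit_tendsto_hit_ever LIMSEQ_unique by blast
qed

lemma hit_ever_disjoint_le_one:
  assumes "E \<inter> F = {}"
  shows "hit_ever P E F y + hit_ever P F E y \<le> 1"
  using hit_ever_union_target[OF assms, of "{}" y] hit_ever_le_one[of "E \<union> F" "{}" y] by simp

lemma hit_mono_sets:
  assumes "E1 \<subseteq> E2" "F2 \<subseteq> F1"
  shows "hit P E1 F1 n y \<le> hit P E2 F2 n y"
proof (induction n arbitrary: y)
  case (Suc n)
  show ?case unfolding hit.simps
    by (intro sum_mono mult_left_mono) (use Suc assms P_nonneg hit_nonneg_le_one in auto)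
qed simp

lemma hit_ever_mono_sets:
  assumes "E1 \<subseteq> E2" "F2 \<subseteq> F1"
  shows "hit_ever P E1 F1 y \<le> hit_ever P E2 F2 y"
  by (rule LIMSEQ_le[OF hit_tendsto_hit_ever hit_tendsto_hit_ever])
     (use hit_mono_sets[OF assms] in auto)

text \<open>First-visit decomposition: either \<open>E\<close> is reached before \<open>F \<union> G\<close>, or the chain first
  visits some \<open>g \<in> G\<close> and then, from \<open>g\<close>, reaches \<open>E\<close> before \<open>F\<close>.\<close>

lemma hit_split_first_visit:
  "hit P E F n y \<le> hit P E (F \<union> G) n y +
     (\<Sum>g\<in>G. hit P {g} (E \<union> F \<union> (G - {g})) n y * hit P E F n g)"
proof (induction n arbitrary: y)
  case (Suc n)
  define c where "c g = hit P E F (Suc n) g" for g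
  have c_nonneg: "0 \<le> c g" for g unfolding c_def by (rule hit_nonneg)
  let ?T = "\<lambda>g w. if w = g then 1 else if w \<in> E \<union> F \<union> (G - {g}) then 0
                   else hit P {g} (E \<union> F \<union> (G - {g})) n w"
  have integrand: "(if w \<in> E then 1 else if w \<in> F then 0 else hit P E F n w)
      \<le> (if w \<in> E then 1 else if w \<in> F \<union> G then 0 else hit P E (F \<union> G) n w)
         + (\<Sum>g\<in>G. ?T g w * c g)" for w
  proof -
    have T_sum_nonneg: "0 \<le> (\<Sum>g\<in>G. ?T g w * c g)"
      by (intro sum_nonneg mult_nonneg_nonneg c_nonneg) (auto simp: hit_nonneg)
    consider "w \<in> E \<union> F" | "w \<notin> E \<union> F" "w \<in> G" | "w \<notin> E \<union> F \<union> G" by blast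
    then show ?thesis
    proof cases
      case 2
      then have "(\<Sum>g\<in>G. ?T g w * c g) = (\<Sum>g\<in>G. if g = w then c g else 0)"
        by (intro sum.cong refl) auto
      with 2 show ?thesis using hit_le_hit_Suc[of E F n w] by (simp add: c_def sum.delta)
    next
      case 3
      then have "(\<Sum>g\<in>G. ?T g w * c g) = (\<Sum>g\<in>G. hit P {g} (E \<union> F \<union> (G - {g})) n w * c g)"
        by (intro sum.cong refl) auto
      moreover have "(\<Sum>g\<in>G. hit P {g} (E \<union> F \<union> (G - {g})) n w * hit P E F n g)
          \<le> (\<Sum>g\<in>G. hit P {g} (E \<union> F \<union> (G - {g})) n w * c g)"
        unfolding c_def by (intro sum_mono mult_left_mono hit_le_hit_Suc hit_nonneg)
      ultimately show ?thesis using Suc[of w] 3 by simp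
    qed (use T_sum_nonneg in auto)
  qed
  have "hit P E F (Suc n) y \<le> (\<Sum>w\<in>UNIV. P y w *
      ((if w \<in> E then 1 else if w \<in> F \<union> G then 0 else hit P E (F \<union> G) n w) + (\<Sum>g\<in>G. ?T g w * c g)))"
    unfolding hit.simps by (intro sum_mono mult_left_mono P_nonneg integrand)
  also have "\<dots> = hit P E (F \<union> G) (Suc n) y + (\<Sum>g\<in>G. hit P {g} (E \<union> F \<union> (G - {g})) (Suc n) y * c g)"
    unfolding hit.simps
    by (simp add: sum.distrib sum_distrib_left sum_distrib_right algebra_simps sum.swap[of _ G UNIV])
  finally show ?case unfolding c_def .
qed simp

text \<open>Renewal at \<open>u\<close>: reaching \<open>E\<close> before \<open>F\<close> and then reaching \<open>F\<close> before returning to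
  \<open>u\<close> are successive excursions from \<open>u\<close>, so the product bounds the probability of
  reaching \<open>E\<close> before \<open>F\<close> within a single excursion.\<close>

lemma hit_ever_renewal:
  assumes "u \<notin> E" "u \<notin> F" "E \<inter> F = {}"
  shows "hit_ever P E F u * hit_ever P F {u} u \<le> hit_ever P E (F \<union> {u}) u"
proof -
  define p where "p = hit_ever P E F u"
  define a where "a = hit_ever P E (F \<union> {u}) u"
  define r where "r = hit_ever P {u} (E \<union> F) u"
  define e where "e = hit_ever P F {u} u"
  have "hit P E F n u \<le> hit P E (F \<union> {u}) n u + hit P {u} (E \<union> F) n u * hit P E F n u" for n
    using hit_split_first_visit[of E F n u "{u}"] by simp
  moreover have "(\<lambda>n. hit P E (F \<union> {u}) n u + hit P {u} (E \<union> F) n u * hit P E F n u)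
      \<longlonglongrightarrow> a + r * p"
    unfolding a_def r_def p_def by (intro tendsto_add tendsto_mult hit_tendsto_hit_ever)
  ultimately have p_le: "p \<le> a + r * p"
    unfolding p_def by (intro LIMSEQ_le[OF hit_tendsto_hit_ever]) auto
  have "e \<le> hit_ever P (E \<union> F) {u} u"
    unfolding e_def by (rule hit_ever_mono_sets) auto
  moreover have "(E \<union> F) \<inter> {u} = {}" using assms by auto
  ultimately have "e \<le> 1 - r"
    using hit_ever_disjoint_le_one[of "E \<union> F" "{u}" u] unfolding r_def by linarith
  then have "p * e \<le> p * (1 - r)"
    unfolding p_def by (intro mult_left_mono hit_ever_nonneg)
  also have "\<dots> \<le> a" using p_le by (simp add: algebra_simps)
  finally show ?thesis unfolding p_def e_def a_def .
qed

lemma survival_Suc: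
  "1 - hit P E {} (Suc n) y = (\<Sum>w\<in>UNIV. P y w * (if w \<in> E then 0 else 1 - hit P E {} n w))"
proof -
  have "1 - hit P E {} (Suc n) y = (\<Sum>w\<in>UNIV. P y w) - hit P E {} (Suc n) y"
    using P_row_sum by simp
  also have "\<dots> = (\<Sum>w\<in>UNIV. P y w * (if w \<in> E then 0 else 1 - hit P E {} n w))"
    unfolding hit.simps sum_subtractf[symmetric] by (intro sum.cong refl) (auto simp: algebra_simps)
  finally show ?thesis .
qed

lemma survival_add_le:
  assumes "\<And>w. 1 - hit P E {} m w \<le> M"
  shows "1 - hit P E {} (n + m) y \<le> (1 - hit P E {} n y) * M"
proof (induction n arbitrary: y)
  case (Suc n)
  have "1 - hit P E {} (Suc n + m) y
      = (\<Sum>w\<in>UNIV. P y w * (if w \<in> E then 0 else 1 - hit P E {} (n + m) w))"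
    using survival_Suc by simp
  also have "\<dots> \<le> (\<Sum>w\<in>UNIV. P y w * ((if w \<in> E then 0 else 1 - hit P E {} n w) * M))"
    by (intro sum_mono mult_left_mono P_nonneg) (use Suc in auto)
  also have "\<dots> = (1 - hit P E {} (Suc n) y) * M"
    unfolding survival_Suc by (simp add: sum_distrib_right mult.assoc)
  finally show ?case .
qed (use assms in simp)

lemma survival_mult_le:
  assumes "\<And>w. 1 - hit P E {} m w \<le> M"
  shows "1 - hit P E {} (k * m) y \<le> M ^ k"
proof (induction k arbitrary: y)
  case (Suc k)
  have M_nonneg: "0 \<le> M" using assms[of y] hit_le_one[of E "{}" m y] by linarith
  have "1 - hit P E {} (k * m + m) y \<le> (1 - hit P E {} (k * m) y) * M"
    by (rule survival_add_le[OF assms])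
  also have "\<dots> \<le> M ^ k * M" by (intro mult_right_mono Suc M_nonneg)
  finally show ?case by (simp add: add.commute mult.commute)
qed simp

lemma hit_pos_if_path:
  assumes "is_path P \<omega>" "last \<omega> \<in> E" "length \<omega> \<le> Suc m"
  shows "(if hd \<omega> \<in> E then 1 else hit P E {} m (hd \<omega>)) > 0"
  using assms
proof (induction \<omega> arbitrary: m)
  case (Cons w \<omega>)
  show ?case
  proof (cases "w \<in> E")
    case False
    then have "\<omega> \<noteq> []" using Cons.prems by auto
    moreover obtain m' where m': "m = Suc m'" using Cons.prems(3) \<open>\<omega> \<noteq> []\<close> by (cases m) auto
    ultimately have step: "P w (hd \<omega>) > 0" "is_path P \<omega>"
      and IH: "(if hd \<omega> \<in> E then 1 else hit P E {} m' (hd \<omega>)) > 0"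
      using Cons by (auto simp: is_path_Cons)
    have "0 < P w (hd \<omega>) * (if hd \<omega> \<in> E then 1 else if hd \<omega> \<in> {} then 0 else hit P E {} m' (hd \<omega>))"
      using step IH by auto
    also have "\<dots> \<le> hit P E {} m w"
      unfolding m' hit.simps
      by (rule member_le_sum) (auto intro!: mult_nonneg_nonneg P_nonneg hit_nonneg)
    finally show ?thesis using False by simp
  qed simp
qed (simp add: is_path_def)

lemma hit_uniformly_pos:
  assumes "\<And>y. \<exists>\<omega>. is_path P \<omega> \<and> hd \<omega> = y \<and> last \<omega> \<in> E"
  obtains m p where "p > 0" "\<And>y. p \<le> hit P E {} m y"
proof -
  from assms obtain path where path: "\<And>y. is_path P (path y) \<and> hd (path y) = y \<and> last (path y) \<in> E"
    by metis
  define m where "m = Max (range (\<lambda>y. length (path y)))"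
  have length_le: "length (path y) \<le> Suc m" for y unfolding m_def by (intro le_SucI Max_ge) auto
  define h where "h w = (if w \<in> E then 1 else hit P E {} m w)" for w
  have h_pos: "h w > 0" for w
  proof -
    have "hd (path w) = w" using path by blast
    moreover have "(if hd (path w) \<in> E then 1 else hit P E {} m (hd (path w))) > 0"
      by (rule hit_pos_if_path) (use path length_le in auto)
    ultimately show ?thesis by (simp add: h_def cong: if_cong)
  qed
  define p where "p = Min (range h)"
  have "p > 0" unfolding p_def using h_pos by (subst Min_gr_iff) auto
  moreover have "p \<le> hit P E {} (Suc m) y" for y
  proof -
    have "p = (\<Sum>w\<in>UNIV. P y w * p)" using P_row_sum[of y] by (simp add: sum_distrib_right[symmetric])
    also have "\<dots> \<le> (\<Sum>w\<in>UNIV. P y w * h w)"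
      unfolding p_def by (intro sum_mono mult_left_mono P_nonneg Min_le) auto
    also have "\<dots> = hit P E {} (Suc m) y" by (simp add: h_def cong: if_cong)
    finally show ?thesis .
  qed
  ultimately show ?thesis using that by blast
qed

lemma hit_ever_eq_1_if_reachable:
  assumes "\<And>y. \<exists>\<omega>. is_path P \<omega> \<and> hd \<omega> = y \<and> last \<omega> \<in> E"
  shows "hit_ever P E {} y = 1"
proof -
  obtain m p where p: "p > 0" "\<And>y. p \<le> hit P E {} m y"
    using hit_uniformly_pos[OF assms] by blast
  have "p \<le> 1" using p(2)[of y] hit_le_one[of E "{}" m y] by linarith
  then have "(\<lambda>k. 1 - (1 - p) ^ k) \<longlonglongrightarrow> 1 - 0"
    using p(1) by (intro tendsto_diff tendsto_const LIMSEQ_realpow_zero) auto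
  moreover have "1 - (1 - p) ^ k \<le> hit_ever P E {} y" for k
    using survival_mult_le[of E m "1 - p" k y] p(2) hit_le_hit_ever[of E "{}" "k * m" y]
    by (simp add: algebra_simps)
  ultimately have "1 \<le> hit_ever P E {} y"
    by (intro LIMSEQ_le_const2[of "\<lambda>k. 1 - (1 - p) ^ k"]) auto
  then show ?thesis using hit_ever_le_one[of E "{}" y] by linarith
qed

lemma hit_Suc_Compl:
  assumes "E \<inter> F = {}"
  shows "hit P E F (Suc n) y = (\<Sum>v\<in>-F. P y v * (if v \<in> E then 1 else hit P E F n v))"
  unfolding hit.simps by (subst sum_UNIV_eq_sum_Compl[of F]) (use assms in \<open>auto intro!: sum.cong\<close>)

lemma survival_Suc_Compl:
  "1 - hit P D {} (Suc n) y = (\<Sum>v\<in>-D. P y v * (1 - hit P D {} n v))"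
  unfolding survival_Suc by (subst sum_UNIV_eq_sum_Compl[of D]) (auto intro!: sum.cong)

text \<open>\<open>visits D w n y\<close>: expected number of visits to \<open>w\<close> at times \<open>0, \<dots>, n - 1\<close> before the
  chain started at \<open>y\<close> enters \<open>D\<close>.\<close>

fun visits :: "'a set \<Rightarrow> 'a \<Rightarrow> nat \<Rightarrow> 'a \<Rightarrow> real" where
  "visits D w 0 y = 0"
| "visits D w (Suc n) y = (if y = w then 1 else 0) + (\<Sum>v\<in>-D. P y v * visits D w n v)"

lemma visits_le:
  assumes w: "w \<notin> D" and escape_pos: "hit_ever P D {w} w > 0"
  shows "visits D w n y \<le> (1 / hit_ever P D {w} w) * (if y = w then 1 else hit P {w} D n y)"
proof (induction n arbitrary: y)
  case (Suc n)
  define M where "M = 1 / hit_ever P D {w} w"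
  have M_nonneg: "M \<ge> 0" unfolding M_def using escape_pos by simp
  have step: "(\<Sum>v\<in>-D. P y v * visits D w n v) \<le> M * hit P {w} D (Suc n) y"
  proof -
    have "(\<Sum>v\<in>-D. P y v * visits D w n v)
        \<le> (\<Sum>v\<in>-D. P y v * (M * (if v = w then 1 else hit P {w} D n v)))"
      by (intro sum_mono mult_left_mono P_nonneg) (use Suc in \<open>simp add: M_def\<close>)
    also have "\<dots> = M * hit P {w} D (Suc n) y"
      using hit_Suc_Compl[of "{w}" D n y] w by (simp add: sum_distrib_left algebra_simps del: hit.simps)
    finally show ?thesis .
  qed
  show ?case
  proof (cases "y = w")
    case True
    have "visits D w (Suc n) y \<le> 1 + M * hit P {w} D (Suc n) w" using step True by simp
    also have "\<dots> \<le> 1 + M * hit_ever P {w} D w"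
      by (intro add_left_mono mult_left_mono M_nonneg hit_le_hit_ever)
    also have "\<dots> \<le> 1 + M * (1 - hit_ever P D {w} w)"
      using hit_ever_disjoint_le_one[of "{w}" D w] w M_nonneg by (intro add_left_mono mult_left_mono) auto
    also have "\<dots> = M" unfolding M_def using escape_pos by (simp add: field_simps)
    finally show ?thesis using True unfolding M_def by simp
  qed (use step M_def in simp)
qed (use escape_pos in simp)

lemma sum_visits:
  "y \<notin> D \<Longrightarrow> (\<Sum>w\<in>-D. visits D w n y) = (\<Sum>t<n. 1 - hit P D {} t y)"
proof (induction n arbitrary: y)
  case (Suc n)
  have "(\<Sum>w\<in>-D. visits D w (Suc n) y)
      = (\<Sum>w\<in>-D. if y = w then 1 else 0) + (\<Sum>w\<in>-D. \<Sum>v\<in>-D. P y v * visits D w n v)"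
    by (simp add: sum.distrib)
  also have "(\<Sum>w\<in>-D. \<Sum>v\<in>-D. P y v * visits D w n v) = (\<Sum>v\<in>-D. P y v * (\<Sum>w\<in>-D. visits D w n v))"
    unfolding sum_distrib_left by (rule sum.swap)
  also have "\<dots> = (\<Sum>v\<in>-D. P y v * (\<Sum>t<n. 1 - hit P D {} t v))"
    by (intro sum.cong refl) (simp add: Suc.IH)
  also have "\<dots> = (\<Sum>t<n. \<Sum>v\<in>-D. P y v * (1 - hit P D {} t v))"
    unfolding sum_distrib_left by (rule sum.swap)
  also have "\<dots> = (\<Sum>t<n. 1 - hit P D {} (Suc t) y)"
    by (simp add: survival_Suc_Compl del: hit.simps)
  finally have "(\<Sum>w\<in>-D. visits D w (Suc n) y) = 1 + (\<Sum>t<n. 1 - hit P D {} (Suc t) y)"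
    using Suc.prems by (simp add: sum.delta del: hit.simps)
  then show ?case by (simp only: sum.lessThan_Suc_shift hit.simps(1) diff_zero)
qed simp

text \<open>The expected time to enter \<open>D\<close> is the total expected number of visits to states outside
  \<open>D\<close>, and each state \<open>w\<close> is visited at most \<open>1 / P\<^sub>w(\<tau>\<^sub>D < \<tau>\<^sub>w\<^sup>+)\<close> times on average.\<close>

lemma mult_survival_le_sum_inverse_escape:
  assumes "y \<notin> D" and escape_pos: "\<And>w. w \<notin> D \<Longrightarrow> hit_ever P D {w} w > 0"
  shows "real n * (1 - hit P D {} n y) \<le> (\<Sum>w\<in>-D. 1 / hit_ever P D {w} w)"
proof -
  have "real n * (1 - hit P D {} n y) = (\<Sum>t<n. 1 - hit P D {} n y)" by simp
  also have "\<dots> \<le> (\<Sum>t<n. 1 - hit P D {} t y)"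
    by (intro sum_mono) (auto intro: hit_mono)
  also have "\<dots> = (\<Sum>w\<in>-D. visits D w n y)" using sum_visits[of y D n] assms(1) by simp
  also have "\<dots> \<le> (\<Sum>w\<in>-D. 1 / hit_ever P D {w} w)"
  proof (intro sum_mono)
    fix w assume w: "w \<in> -D"
    have "visits D w n y \<le> (1 / hit_ever P D {w} w) * (if y = w then 1 else hit P {w} D n y)"
      by (rule visits_le) (use w escape_pos in auto)
    also have "\<dots> \<le> 1 / hit_ever P D {w} w"
      by (intro mult_left_le) (use escape_pos[of w] w hit_le_one in auto)
    finally show "visits D w n y \<le> 1 / hit_ever P D {w} w" .
  qed
  finally show ?thesis .
qed

lemma hit_Suc_split:
  "hit P E F (Suc n) y = (\<Sum>e\<in>E. P y e) + (\<Sum>w\<in>-(E \<union> F). P y w * hit P E F n w)"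
proof -
  have "hit P E F (Suc n) y = (\<Sum>w\<in>UNIV. (if w \<in> E then P y w else 0)
      + (if w \<in> -(E \<union> F) then P y w * hit P E F n w else 0))"
    unfolding hit.simps by (intro sum.cong refl) auto
  then show ?thesis
    unfolding sum.distrib sum.If_cases[OF finite] by (simp add: Collect_neg_eq[symmetric] Compl_eq)
qed

fun killed_iter :: "'a set \<Rightarrow> ('a \<Rightarrow> real) \<Rightarrow> nat \<Rightarrow> 'a \<Rightarrow> real" where
  "killed_iter L f 0 = f"
| "killed_iter L f (Suc t) = (\<lambda>y. \<Sum>v\<in>L. P y v * killed_iter L f t v)"

lemma killed_iter_Suc': "killed_iter L (\<lambda>y. \<Sum>v\<in>L. P y v * f v) t = killed_iter L f (Suc t)"
  by (induction t) auto

lemma hit_eq_sum_killed_iter: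
  "hit P E F n y = (\<Sum>t<n. killed_iter (-(E \<union> F)) (\<lambda>c. \<Sum>e\<in>E. P c e) t y)"
proof (induction n arbitrary: y)
  case (Suc n)
  show ?case
    unfolding hit_Suc_split Suc sum.lessThan_Suc_shift
    by (simp add: sum_distrib_left) (rule sum.swap)
qed simp

end

section \<open>Reversible chains: flux and capacity\<close>

lemma telescope_large_step:
  fixes g :: "nat \<Rightarrow> real"
  assumes "k > 0" "g 0 - g k = 1"
  shows "\<exists>i<k. g i - g (Suc i) \<ge> 1 / real k"
proof (rule ccontr)
  assume "\<not> ?thesis"
  then have "(\<Sum>i<k. g i - g (Suc i)) < (\<Sum>i<k. 1 / real k)"
    using assms(1) by (intro sum_strict_mono) auto
  with assms show False by (simp add: sum_lessThan_telescope')
qed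

definition flux :: "('a \<Rightarrow> 'a \<Rightarrow> real) \<Rightarrow> ('a \<Rightarrow> real) \<Rightarrow> 'a set \<Rightarrow> 'a set \<Rightarrow> real" where
  "flux P mu K E = (\<Sum>c\<in>K. \<Sum>y\<in>E. mu c * P c y)"

locale reversible_chain = stochastic_matrix +
  fixes mu :: "'a \<Rightarrow> real"
  assumes mu_pos: "\<And>u. mu u > 0"
    and detailed_balance: "\<And>u v. mu u * P u v = mu v * P v u"
begin

lemma mu_nonneg: "0 \<le> mu u"
  using mu_pos less_imp_le by blast

lemma mu_hit_exit_le_flux:
  assumes "u \<in> K"
  shows "mu u * hit P (-K) {} n u \<le> real n * flux P mu K (-K)"
proof -
  have "(\<Sum>y\<in>K. mu y * hit P (-K) {} n y) \<le> real n * flux P mu K (-K)"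
  proof (induction n)
    case (Suc n)
    have "(\<Sum>y\<in>K. mu y * hit P (-K) {} (Suc n) y)
        = flux P mu K (-K) + (\<Sum>y\<in>K. \<Sum>w\<in>K. mu y * P y w * hit P (-K) {} n w)"
      unfolding hit_Suc_split flux_def by (simp add: sum.distrib sum_distrib_left algebra_simps)
    also have "(\<Sum>y\<in>K. \<Sum>w\<in>K. mu y * P y w * hit P (-K) {} n w)
        = (\<Sum>w\<in>K. hit P (-K) {} n w * (\<Sum>y\<in>K. mu w * P w y))"
      by (subst sum.swap) (simp add: sum_distrib_left detailed_balance mult.commute mult.left_commute)
    also have "\<dots> \<le> (\<Sum>w\<in>K. hit P (-K) {} n w * mu w)"
    proof (intro sum_mono mult_left_mono hit_nonneg)
      fix w
      have "(\<Sum>y\<in>K. P w y) \<le> (\<Sum>y\<in>UNIV. P w y)" by (rule sum_mono2) (auto simp: P_nonneg)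
      then show "(\<Sum>y\<in>K. mu w * P w y) \<le> mu w"
        using P_row_sum[of w] mu_nonneg[of w] by (simp add: sum_distrib_left[symmetric] mult_left_le)
    qed
    finally show ?case using Suc by (simp add: algebra_simps mult.commute)
  qed simp
  moreover have "mu u * hit P (-K) {} n u \<le> (\<Sum>y\<in>K. mu y * hit P (-K) {} n y)"
    by (rule member_le_sum) (use assms in \<open>auto intro!: mult_nonneg_nonneg hit_nonneg mu_nonneg\<close>)
  ultimately show ?thesis by linarith
qed

lemma killed_iter_self_adjoint:
  "(\<Sum>c\<in>L. mu c * a c * killed_iter L b t c) = (\<Sum>c\<in>L. mu c * b c * killed_iter L a t c)"
proof (induction t arbitrary: a)
  case (Suc t)
  have "(\<Sum>c\<in>L. mu c * a c * killed_iter L b (Suc t) c)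
      = (\<Sum>v\<in>L. \<Sum>c\<in>L. mu c * a c * P c v * killed_iter L b t v)"
    by (subst sum.swap) (simp add: sum_distrib_left algebra_simps)
  also have "\<dots> = (\<Sum>v\<in>L. mu v * (\<Sum>c\<in>L. P v c * a c) * killed_iter L b t v)"
    by (simp add: sum_distrib_left sum_distrib_right detailed_balance mult.commute mult.left_commute)
  also have "\<dots> = (\<Sum>v\<in>L. mu v * b v * killed_iter L (\<lambda>y. \<Sum>c\<in>L. P y c * a c) t v)"
    by (rule Suc.IH)
  finally show ?case by (simp add: killed_iter_Suc')
qed (simp add: algebra_simps)

text \<open>The hitting probability below is that of reaching \<open>E\<close> from \<open>u\<close> before returning to \<open>u\<close> or
  leaving \<open>K \<union> E\<close>. By reversibility, paths from \<open>u\<close> to \<open>E\<close> inside \<open>K\<close> are matched with their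
  reversals, which end at \<open>u\<close>; this turns the sum over paths into the flux into \<open>E\<close>.\<close>

lemma mu_hit_before_return_le_flux:
  assumes "u \<in> K" "E \<inter> K = {}"
  shows "mu u * hit P E ((-K - E) \<union> {u}) n u \<le> flux P mu K E"
proof (cases n)
  case (Suc m)
  define L where "L = K - {u}"
  have L: "-(E \<union> ((-K - E) \<union> {u})) = L" "-({u} \<union> -K) = L" unfolding L_def using assms by auto
  define phi where "phi c = (\<Sum>e\<in>E. P c e)" for c
  have phi_nonneg: "0 \<le> phi c" for c unfolding phi_def by (intro sum_nonneg P_nonneg)
  have "mu u * hit P E ((-K - E) \<union> {u}) n u
      = mu u * phi u + (\<Sum>v\<in>L. mu u * P u v * hit P E ((-K - E) \<union> {u}) m v)"
    unfolding Suc hit_Suc_split L phi_def by (simp add: sum_distrib_left algebra_simps)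
  also have "(\<Sum>v\<in>L. mu u * P u v * hit P E ((-K - E) \<union> {u}) m v)
      = (\<Sum>v\<in>L. mu v * P v u * (\<Sum>t<m. killed_iter L phi t v))"
    unfolding hit_eq_sum_killed_iter[of E] L phi_def detailed_balance ..
  also have "(\<Sum>v\<in>L. mu v * P v u * (\<Sum>t<m. killed_iter L phi t v))
      = (\<Sum>t<m. \<Sum>v\<in>L. mu v * phi v * killed_iter L (\<lambda>c. P c u) t v)"
    unfolding sum_distrib_left by (subst sum.swap) (simp add: killed_iter_self_adjoint)
  also have "\<dots> = (\<Sum>v\<in>L. mu v * phi v * hit P {u} (-K) m v)"
    unfolding hit_eq_sum_killed_iter[of "{u}" "-K"] L by (simp add: sum_distrib_left sum.swap[of _ L])
  also have "\<dots> \<le> (\<Sum>v\<in>L. mu v * phi v)"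
    by (intro sum_mono mult_left_le hit_le_one mult_nonneg_nonneg mu_nonneg phi_nonneg)
  also have "mu u * phi u + (\<Sum>v\<in>L. mu v * phi v) = flux P mu K E"
    unfolding L_def flux_def phi_def using assms(1) by (simp add: sum.remove sum_distrib_left)
  finally show ?thesis by simp
qed (simp add: flux_def sum_nonneg mult_nonneg_nonneg P_nonneg mu_nonneg)

lemma sum_mu_P_column: "(\<Sum>v\<in>UNIV. mu v * P v w) = mu w"
proof -
  have "(\<Sum>v\<in>UNIV. mu v * P v w) = (\<Sum>v\<in>UNIV. mu w * P w v)"
    by (intro sum.cong refl) (rule detailed_balance)
  also have "\<dots> = mu w" using P_row_sum[of w] by (simp add: sum_distrib_left[symmetric])
  finally show ?thesis .
qed

lemma dirichlet_form_eq:
  "(\<Sum>v\<in>UNIV. \<Sum>w\<in>UNIV. mu v * P v w * (h v - h w)\<^sup>2)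
     = 2 * (\<Sum>v\<in>UNIV. mu v * h v * (h v - (\<Sum>w\<in>UNIV. P v w * h w)))"
proof -
  have "(\<Sum>v\<in>UNIV. \<Sum>w\<in>UNIV. mu v * P v w * (h v)\<^sup>2) = (\<Sum>v\<in>UNIV. mu v * (h v)\<^sup>2)"
    using P_row_sum by (simp add: sum_distrib_right[symmetric] sum_distrib_left[symmetric])
  moreover have "(\<Sum>v\<in>UNIV. \<Sum>w\<in>UNIV. mu v * P v w * (h w)\<^sup>2) = (\<Sum>w\<in>UNIV. mu w * (h w)\<^sup>2)"
    by (subst sum.swap) (simp add: sum_distrib_right[symmetric] sum_mu_P_column)
  moreover have "(\<Sum>v\<in>UNIV. \<Sum>w\<in>UNIV. mu v * P v w * h v * h w)
      = (\<Sum>v\<in>UNIV. mu v * h v * (\<Sum>w\<in>UNIV. P v w * h w))"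
    by (simp add: sum_distrib_left algebra_simps)
  ultimately show ?thesis
    by (simp add: power2_diff algebra_simps sum.distrib sum_subtractf sum_distrib_left power2_eq_square)
qed

text \<open>Dirichlet principle for the equilibrium potential \<open>h\<close> of \<open>({u}, F)\<close>: its Dirichlet form is
  twice the capacity \<open>mu u * P\<^sub>u(\<tau>\<^sub>F < \<tau>\<^sub>u\<^sup>+)\<close>.\<close>

lemma dirichlet_form_equilibrium_potential:
  assumes u: "u \<notin> F" and recurrent: "hit_ever P (F \<union> {u}) {} u = 1"
  defines "h \<equiv> (\<lambda>v. if v = u then 1 else if v \<in> F then 0 else hit_ever P {u} F v)"
  shows "(\<Sum>v\<in>UNIV. \<Sum>w\<in>UNIV. mu v * P v w * (h v - h w)\<^sup>2) = 2 * (mu u * hit_ever P F {u} u)"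
proof -
  have harmonic: "hit_ever P {u} F v = (\<Sum>w\<in>UNIV. P v w * h w)" for v
    unfolding h_def by (subst hit_ever_unfold) (intro sum.cong refl, use u in auto)
  have "mu v * h v * (h v - (\<Sum>w\<in>UNIV. P v w * h w))
      = (if v = u then mu u * (1 - hit_ever P {u} F u) else 0)" for v
    using harmonic[of v] u unfolding h_def by auto
  moreover have "hit_ever P F {u} u + hit_ever P {u} F u = 1"
    using hit_ever_union_target[of F "{u}" "{}" u] u recurrent by simp
  ultimately show ?thesis unfolding dirichlet_form_eq by simp
qed

text \<open>Along any path from \<open>u\<close> to \<open>F\<close> of length \<open>k + 1\<close> the equilibrium potential drops from 1 to 0,
  so some edge carries a drop \<open>\<ge> 1 / k\<close> and hence weight \<open>\<le> k\<^sup>2\<close> times the Dirichlet form.\<close>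

lemma edge_weight_le_capacity:
  assumes u: "u \<notin> F" and recurrent: "hit_ever P (F \<union> {u}) {} u = 1"
    and path: "\<omega> \<noteq> []" "hd \<omega> = u" "last \<omega> \<in> F"
  shows "\<exists>i. Suc i < length \<omega> \<and> \<omega> ! i \<noteq> \<omega> ! Suc i \<and>
     mu (\<omega> ! i) * P (\<omega> ! i) (\<omega> ! Suc i) \<le> 2 * (real (length \<omega> - 1))\<^sup>2 * (mu u * hit_ever P F {u} u)"
proof -
  define h where "h = (\<lambda>v. if v = u then 1 else if v \<in> F then 0 else hit_ever P {u} F v)"
  define k where "k = length \<omega> - 1"
  have length_eq: "length \<omega> = Suc k" unfolding k_def using path by (cases \<omega>) auto
  have "\<omega> ! k \<in> F" using path length_eq by (simp add: last_conv_nth)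
  then have "k > 0" "h (\<omega> ! 0) = 1" "h (\<omega> ! k) = 0"
    using path u by (auto simp: h_def hd_conv_nth[symmetric] intro!: Nat.gr0I)
  then obtain i where i: "i < k" "h (\<omega> ! i) - h (\<omega> ! Suc i) \<ge> 1 / real k"
    using telescope_large_step[of k "\<lambda>i. h (\<omega> ! i)"] by auto
  have distinct: "\<omega> ! i \<noteq> \<omega> ! Suc i" using i \<open>k > 0\<close> by auto
  let ?f = "\<lambda>v w. mu v * P v w * (h v - h w)\<^sup>2"
  have "(1 / real k)\<^sup>2 \<le> (h (\<omega> ! i) - h (\<omega> ! Suc i))\<^sup>2"
    using i(2) \<open>k > 0\<close> by (intro power_mono) auto
  then have "mu (\<omega> ! i) * P (\<omega> ! i) (\<omega> ! Suc i) * (1 / real k)\<^sup>2 \<le> ?f (\<omega> ! i) (\<omega> ! Suc i)"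
    by (intro mult_left_mono mult_nonneg_nonneg P_nonneg mu_nonneg)
  also have "\<dots> \<le> (\<Sum>w\<in>UNIV. ?f (\<omega> ! i) w)"
    by (rule member_le_sum) (auto intro!: mult_nonneg_nonneg P_nonneg mu_nonneg)
  also have "\<dots> \<le> (\<Sum>v\<in>UNIV. \<Sum>w\<in>UNIV. ?f v w)"
    by (rule member_le_sum[where f = "\<lambda>v. \<Sum>w\<in>UNIV. ?f v w"])
       (auto intro!: sum_nonneg mult_nonneg_nonneg P_nonneg mu_nonneg)
  also have "\<dots> = 2 * (mu u * hit_ever P F {u} u)"
    unfolding h_def by (rule dirichlet_form_equilibrium_potential[OF u recurrent])
  finally have "mu (\<omega> ! i) * P (\<omega> ! i) (\<omega> ! Suc i) \<le> 2 * (real k)\<^sup>2 * (mu u * hit_ever P F {u} u)"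
    using \<open>k > 0\<close> by (simp add: field_simps power2_eq_square)
  then show ?thesis using i distinct length_eq unfolding k_def by (intro exI[of _ i]) auto
qed

lemma mu_hit_ever_mult_escape_le_flux:
  assumes "u \<in> K" "E \<inter> K = {}" "-K - E \<subseteq> F" "u \<notin> F" "E \<inter> F = {}"
  shows "mu u * (hit_ever P E F u * hit_ever P F {u} u) \<le> flux P mu K E"
proof -
  have "hit_ever P E F u * hit_ever P F {u} u \<le> hit_ever P E (F \<union> {u}) u"
    using assms by (intro hit_ever_renewal) auto
  also have "\<dots> \<le> hit_ever P E ((-K - E) \<union> {u}) u"
    using assms(3) by (intro hit_ever_mono_sets) auto
  also have "\<dots> \<le> flux P mu K E / mu u"
    using mu_hit_before_return_le_flux[OF assms(1,2)] mu_pos[of u]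
    by (intro hit_ever_le) (simp add: field_simps mult.commute)
  finally show ?thesis using mu_pos[of u] by (simp add: field_simps mult.commute)
qed

end

section \<open>Energy landscapes and the Metropolis chain\<close>

locale landscape =
  fixes H :: "'a::finite \<Rightarrow> real" and q :: "'a \<Rightarrow> 'a \<Rightarrow> real"
  assumes q_range: "\<forall>u v. 0 \<le> q u v \<and> q u v \<le> 1"
    and q_stoch: "\<forall>u. (\<Sum>v\<in>UNIV. q u v) = 1"
    and q_sym: "\<forall>u v. q u v = q v u"
    and q_irred: "\<forall>u v. \<exists>\<omega>. path_from_to q \<omega> u v"
begin

abbreviation "Phi \<equiv> comm_height H q"
abbreviation "Phi_set \<equiv> comm_height_set H q"

lemma finite_path_heights: "finite {path_height H \<omega> | \<omega>. path_from_to q \<omega> a b}"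
proof (rule finite_subset[of _ "range H"])
  show "{path_height H \<omega> | \<omega>. path_from_to q \<omega> a b} \<subseteq> range H"
    using path_height_in unfolding path_from_to_def is_path_def by fastforce
qed simp

lemma Phi_le_path_height: "path_from_to q \<omega> a b \<Longrightarrow> Phi a b \<le> path_height H \<omega>"
  unfolding comm_height_def by (rule Min_le) (use finite_path_heights in auto)

lemma Phi_attained: "\<exists>\<omega>. path_from_to q \<omega> a b \<and> path_height H \<omega> = Phi a b"
proof -
  have "Phi a b \<in> {path_height H \<omega> | \<omega>. path_from_to q \<omega> a b}"
    unfolding comm_height_def by (rule Min_in) (use finite_path_heights q_irred in auto)
  then show ?thesis by auto
qed

lemma H_le_Phi: "H a \<le> Phi a b" "H b \<le> Phi a b"
proof -
  obtain \<omega> where \<omega>: "path_from_to q \<omega> a b" "path_height H \<omega> = Phi a b"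
    using Phi_attained by blast
  then have "a \<in> set \<omega>" "b \<in> set \<omega>"
    using path_from_to_nonempty[OF \<omega>(1)] unfolding path_from_to_def by auto
  then show "H a \<le> Phi a b" "H b \<le> Phi a b" using path_height_ge \<omega>(2) by metis+
qed

lemma Phi_le_edge: "q a b > 0 \<Longrightarrow> Phi a b \<le> max (H a) (H b)"
  using Phi_le_path_height[of "[a, b]" a b] path_height_pair[of H a b]
  by (simp add: path_from_to_def is_path_Cons_Cons)

lemma Phi_trans: "Phi a c \<le> max (Phi a b) (Phi b c)"
proof -
  obtain \<omega>1 where 1: "path_from_to q \<omega>1 a b" "path_height H \<omega>1 = Phi a b"
    using Phi_attained by blast
  obtain \<omega>2 where 2: "path_from_to q \<omega>2 b c" "path_height H \<omega>2 = Phi b c"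
    using Phi_attained by blast
  have "Phi a c \<le> path_height H (\<omega>1 @ tl \<omega>2)"
    by (rule Phi_le_path_height) (rule path_from_to_join[OF 1(1) 2(1)])
  also have "\<dots> \<le> max (Phi a b) (Phi b c)"
    using path_height_append_tl_le 1 2 path_from_to_nonempty by metis
  finally show ?thesis .
qed

lemma path_from_to_rev: "path_from_to q \<omega> a b \<Longrightarrow> path_from_to q (rev \<omega>) b a"
  using is_path_rev[of q \<omega>] q_sym unfolding path_from_to_def
  by (auto simp: hd_rev last_rev)

lemma finite_Phi_values: "finite {Phi a b | a b. a \<in> B \<and> b \<in> D}"
  by (rule finite_subset[of _ "(\<lambda>(a, b). Phi a b) ` UNIV"]) auto

lemma Phi_set_le: "a \<in> B \<Longrightarrow> b \<in> D \<Longrightarrow> Phi_set B D \<le> Phi a b"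
  unfolding comm_height_set_def by (rule Min_le) (use finite_Phi_values in auto)

lemma Phi_set_attained: "B \<noteq> {} \<Longrightarrow> D \<noteq> {} \<Longrightarrow> \<exists>a\<in>B. \<exists>b\<in>D. Phi_set B D = Phi a b"
proof -
  assume "B \<noteq> {}" "D \<noteq> {}"
  then have "Phi_set B D \<in> {Phi a b | a b. a \<in> B \<and> b \<in> D}"
    unfolding comm_height_set_def by (intro Min_in finite_Phi_values) auto
  then show ?thesis by auto
qed

lemma Phi_set_ge:
  "B \<noteq> {} \<Longrightarrow> D \<noteq> {} \<Longrightarrow> (\<And>a b. a \<in> B \<Longrightarrow> b \<in> D \<Longrightarrow> c \<le> Phi a b) \<Longrightarrow> c \<le> Phi_set B D"
  using Phi_set_attained by metis

lemma H_le_Phi_set: "A \<noteq> {} \<Longrightarrow> H z \<le> Phi_set {z} A"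
  using Phi_set_attained[of "{z}" A] H_le_Phi by fastforce

lemma optimal_path_to_set:
  assumes "A \<noteq> {}"
  obtains \<omega> a where "path_from_to q \<omega> z a" "a \<in> A" "path_height H \<omega> = Phi_set {z} A"
proof -
  obtain a where "a \<in> A" "Phi_set {z} A = Phi z a" using Phi_set_attained[of "{z}" A] assms by auto
  with Phi_attained[of z a] that show ?thesis by metis
qed

lemma q_nonneg: "0 \<le> q u v"
  using q_range by blast

lemma q_le_one: "q u v \<le> 1"
  using q_range by blast

lemma metro_diag_ge:
  assumes "\<beta> \<ge> 0"
  shows "q u u \<le> metro H q \<beta> u u"
proof -
  have "(\<Sum>z\<in>UNIV - {u}. q u z * exp (- \<beta> * max 0 (H z - H u))) \<le> (\<Sum>z\<in>UNIV - {u}. q u z)"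
    using assms q_nonneg by (intro sum_mono) (simp add: mult_left_le mult_nonneg_nonneg)
  moreover have "(\<Sum>z\<in>UNIV. q u z) = q u u + (\<Sum>z\<in>UNIV - {u}. q u z)"
    by (rule sum.remove) auto
  ultimately show ?thesis using q_stoch unfolding metro_def by simp
qed

lemma metro_nonneg:
  assumes "\<beta> \<ge> 0"
  shows "0 \<le> metro H q \<beta> u v"
proof (cases "u = v")
  case True
  with metro_diag_ge[OF assms, of u] q_nonneg[of u u] show ?thesis by simp
qed (simp add: metro_def q_nonneg)

lemma metro_pos:
  assumes "\<beta> \<ge> 0" "q u v > 0"
  shows "metro H q \<beta> u v > 0"
proof (cases "u = v")
  case True
  with metro_diag_ge[OF assms(1), of u] assms(2) show ?thesis by simp
qed (use assms(2) in \<open>simp add: metro_def\<close>)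

lemma q_pos_if_metro_nonzero: "u \<noteq> v \<Longrightarrow> metro H q \<beta> u v \<noteq> 0 \<Longrightarrow> q u v > 0"
  using q_nonneg[of u v] by (auto simp: metro_def less_le)

lemma metro_row_sum: "(\<Sum>v\<in>UNIV. metro H q \<beta> u v) = 1"
proof -
  have "(\<Sum>v\<in>UNIV. metro H q \<beta> u v) = metro H q \<beta> u u + (\<Sum>v\<in>UNIV - {u}. metro H q \<beta> u v)"
    by (rule sum.remove) auto
  also have "(\<Sum>v\<in>UNIV - {u}. metro H q \<beta> u v)
      = (\<Sum>z\<in>UNIV - {u}. q u z * exp (- \<beta> * max 0 (H z - H u)))"
    by (intro sum.cong refl) (auto simp: metro_def)
  finally show ?thesis unfolding metro_def by simp
qed

lemma gibbs_metro:
  assumes "u \<noteq> v"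
  shows "exp (- \<beta> * H u) * metro H q \<beta> u v = q u v * exp (- \<beta> * max (H u) (H v))"
proof -
  have "- \<beta> * H u + - \<beta> * max 0 (H v - H u) = - \<beta> * max (H u) (H v)"
    by (simp add: max_def algebra_simps)
  then have "exp (- \<beta> * H u) * exp (- \<beta> * max 0 (H v - H u)) = exp (- \<beta> * max (H u) (H v))"
    by (metis exp_add)
  then show ?thesis using assms unfolding metro_def by (simp add: algebra_simps)
qed

lemma metro_detailed_balance:
  "exp (- \<beta> * H u) * metro H q \<beta> u v = exp (- \<beta> * H v) * metro H q \<beta> v u"
  using gibbs_metro[of u v \<beta>] gibbs_metro[of v u \<beta>] q_sym by (cases "u = v") (auto simp: max.commute)

lemma metro_reversible_chain: "\<beta> \<ge> 0 \<Longrightarrow> reversible_chain (metro H q \<beta>) (\<lambda>y. exp (- \<beta> * H y))"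
  unfolding reversible_chain_def reversible_chain_axioms_def stochastic_matrix_def
  using metro_nonneg metro_row_sum metro_detailed_balance by auto

lemma hit_le_eq_hit: "hit_le H q \<beta> A n y = hit (metro H q \<beta>) A {} n y"
  by (induction n arbitrary: y) (simp_all cong: if_cong)

lemma is_path_metro: "\<beta> \<ge> 0 \<Longrightarrow> is_path q \<omega> \<Longrightarrow> is_path (metro H q \<beta>) \<omega>"
  using metro_pos unfolding is_path_def by blast

lemma hit_ever_metro_eq_1:
  assumes "\<beta> \<ge> 0" "F \<noteq> {}"
  shows "hit_ever (metro H q \<beta>) F {} y = 1"
proof -
  interpret reversible_chain "metro H q \<beta>" "\<lambda>y. exp (- \<beta> * H y)"
    using metro_reversible_chain[OF assms(1)] .
  show ?thesis
  proof (rule hit_ever_eq_1_if_reachable)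
    fix y
    obtain f \<omega> where "f \<in> F" "path_from_to q \<omega> y f" using \<open>F \<noteq> {}\<close> q_irred by blast
    then show "\<exists>\<omega>. is_path (metro H q \<beta>) \<omega> \<and> hd \<omega> = y \<and> last \<omega> \<in> F"
      using is_path_metro[OF \<open>\<beta> \<ge> 0\<close>] unfolding path_from_to_def by blast
  qed
qed

definition q_min :: real where
  "q_min = Min {q u v | u v. q u v > 0}"

lemma finite_q_values: "finite {q u v | u v. q u v > 0}"
  by (rule finite_subset[of _ "(\<lambda>(u, v). q u v) ` UNIV"]) auto

lemma q_min_le: "q u v > 0 \<Longrightarrow> q_min \<le> q u v"
  unfolding q_min_def by (rule Min_le) (use finite_q_values in auto)

lemma q_min_pos: "q_min > 0"
proof -
  obtain u :: 'a where True by blast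
  have "(\<Sum>v\<in>UNIV. q u v) \<noteq> 0" using q_stoch by simp
  then obtain v where "q u v \<noteq> 0" by (meson sum.neutral)
  then have "q u v > 0" using q_nonneg[of u v] by linarith
  then have "{q u v | u v. q u v > 0} \<noteq> {}" by blast
  then have "q_min \<in> {q u v | u v. q u v > 0}" unfolding q_min_def by (rule Min_in[OF finite_q_values])
  then show ?thesis by auto
qed

lemma capacity_ge_path:
  assumes \<beta>: "\<beta> \<ge> 0" and u: "u \<notin> F" and \<omega>: "path_from_to q \<omega> u f" and "f \<in> F"
  shows "q_min * exp (- \<beta> * path_height H \<omega>)
    \<le> 2 * (real (length \<omega> - 1))\<^sup>2 * (exp (- \<beta> * H u) * hit_ever (metro H q \<beta>) F {u} u)"
proof -
  interpret reversible_chain "metro H q \<beta>" "\<lambda>y. exp (- \<beta> * H y)"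
    using metro_reversible_chain[OF \<beta>] .
  have "hit_ever (metro H q \<beta>) (F \<union> {u}) {} u = 1" by (rule hit_ever_metro_eq_1[OF \<beta>]) auto
  moreover have "\<omega> \<noteq> []" using path_from_to_nonempty[OF \<omega>] .
  moreover have "hd \<omega> = u" "last \<omega> \<in> F" using \<omega> \<open>f \<in> F\<close> unfolding path_from_to_def by auto
  ultimately obtain i where i: "Suc i < length \<omega>" "\<omega> ! i \<noteq> \<omega> ! Suc i"
    "exp (- \<beta> * H (\<omega> ! i)) * metro H q \<beta> (\<omega> ! i) (\<omega> ! Suc i)
       \<le> 2 * (real (length \<omega> - 1))\<^sup>2 * (exp (- \<beta> * H u) * hit_ever (metro H q \<beta>) F {u} u)"
    using edge_weight_le_capacity[OF u] by blast
  have q_pos: "q (\<omega> ! i) (\<omega> ! Suc i) > 0"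
    using \<omega> i unfolding path_from_to_def is_path_def by blast
  have "max (H (\<omega> ! i)) (H (\<omega> ! Suc i)) \<le> path_height H \<omega>"
    using i by (auto intro!: path_height_ge)
  then have "exp (- \<beta> * path_height H \<omega>) \<le> exp (- \<beta> * max (H (\<omega> ! i)) (H (\<omega> ! Suc i)))"
    using \<beta> by (simp add: mult_left_mono)
  then have "q_min * exp (- \<beta> * path_height H \<omega>)
      \<le> q (\<omega> ! i) (\<omega> ! Suc i) * exp (- \<beta> * max (H (\<omega> ! i)) (H (\<omega> ! Suc i)))"
    using q_min_le[OF q_pos] q_min_pos by (intro mult_mono) auto
  also have "\<dots> = exp (- \<beta> * H (\<omega> ! i)) * metro H q \<beta> (\<omega> ! i) (\<omega> ! Suc i)"
    using gibbs_metro[OF i(2)] by simp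
  finally show ?thesis using i(3) by linarith
qed

lemma flux_metro_le:
  assumes \<beta>: "\<beta> \<ge> 0" and "K \<inter> E = {}"
    and level: "\<And>c y. c \<in> K \<Longrightarrow> y \<in> E \<Longrightarrow> q c y > 0 \<Longrightarrow> S \<le> max (H c) (H y)"
  shows "flux (metro H q \<beta>) (\<lambda>y. exp (- \<beta> * H y)) K E \<le> (real (card (UNIV :: 'a set)))\<^sup>2 * exp (- \<beta> * S)"
proof -
  have edge: "exp (- \<beta> * H c) * metro H q \<beta> c y \<le> exp (- \<beta> * S)" if "c \<in> K" "y \<in> E" for c y
  proof (cases "q c y > 0")
    case True
    have "exp (- \<beta> * max (H c) (H y)) \<le> exp (- \<beta> * S)"
      using level[OF that True] \<beta> by (simp add: mult_left_mono)
    then have "q c y * exp (- \<beta> * max (H c) (H y)) \<le> 1 * exp (- \<beta> * S)"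
      using q_le_one[of c y] by (intro mult_mono) auto
    moreover have "c \<noteq> y" using that \<open>K \<inter> E = {}\<close> by auto
    ultimately show ?thesis using gibbs_metro[of c y \<beta>] by simp
  next
    case False
    then have "q c y = 0" using q_nonneg[of c y] by simp
    moreover have "c \<noteq> y" using that \<open>K \<inter> E = {}\<close> by auto
    ultimately show ?thesis using gibbs_metro[of c y \<beta>] by simp
  qed
  have "flux (metro H q \<beta>) (\<lambda>y. exp (- \<beta> * H y)) K E \<le> (\<Sum>c\<in>K. \<Sum>y\<in>E. exp (- \<beta> * S))"
    unfolding flux_def by (intro sum_mono edge)
  also have "\<dots> = real (card K) * real (card E) * exp (- \<beta> * S)" by simp
  also have "\<dots> \<le> real (card (UNIV :: 'a set)) * real (card (UNIV :: 'a set)) * exp (- \<beta> * S)"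
    by (intro mult_right_mono mult_mono) (auto intro: card_mono)
  finally show ?thesis by (simp add: power2_eq_square)
qed

text \<open>Arrhenius law: if every edge from \<open>K\<close> into \<open>E\<close> climbs to height \<open>S\<close>, the chain started
  at \<open>u\<close> reaches \<open>E\<close> before \<open>F\<close> with probability \<open>O(exp (- \<beta> * (S - path_height H \<omega>)))\<close>,
  because by renewal this probability times the capacity of \<open>\<omega>\<close> is at most the flux into \<open>E\<close>.\<close>

lemma hit_ever_across_level_le:
  assumes \<beta>: "\<beta> \<ge> 0" and sets: "u \<in> K" "E \<inter> K = {}" "-K - E \<subseteq> F" "u \<notin> F" "E \<inter> F = {}"
    and level: "\<And>c y. c \<in> K \<Longrightarrow> y \<in> E \<Longrightarrow> q c y > 0 \<Longrightarrow> S \<le> max (H c) (H y)"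
    and \<omega>: "path_from_to q \<omega> u f" "f \<in> F"
  shows "hit_ever (metro H q \<beta>) E F u
    \<le> (2 * (real (length \<omega> - 1))\<^sup>2 * (real (card (UNIV :: 'a set)))\<^sup>2 / q_min) * exp (- \<beta> * (S - path_height H \<omega>))"
proof -
  interpret reversible_chain "metro H q \<beta>" "\<lambda>y. exp (- \<beta> * H y)"
    using metro_reversible_chain[OF \<beta>] .
  define p where "p = hit_ever (metro H q \<beta>) E F u"
  define c where "c = exp (- \<beta> * H u) * hit_ever (metro H q \<beta>) F {u} u"
  define k where "k = 2 * (real (length \<omega> - 1))\<^sup>2"
  have flux: "flux (metro H q \<beta>) (\<lambda>y. exp (- \<beta> * H y)) K E \<le> (real (card (UNIV :: 'a set)))\<^sup>2 * exp (- \<beta> * S)"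
    by (rule flux_metro_le[OF \<beta> _ level]) (use sets(2) in auto)
  have "p * c = exp (- \<beta> * H u) * (p * hit_ever (metro H q \<beta>) F {u} u)"
    unfolding c_def by simp
  also have "\<dots> \<le> (real (card (UNIV :: 'a set)))\<^sup>2 * exp (- \<beta> * S)"
    using mu_hit_ever_mult_escape_le_flux[OF sets] flux unfolding p_def by linarith
  finally have pc: "p * c \<le> (real (card (UNIV :: 'a set)))\<^sup>2 * exp (- \<beta> * S)" .
  have "p * (q_min * exp (- \<beta> * path_height H \<omega>)) \<le> p * (k * c)"
    unfolding k_def c_def p_def by (intro mult_left_mono capacity_ge_path[OF \<beta> sets(4) \<omega>] hit_ever_nonneg)
  also have "\<dots> = k * (p * c)" by simp
  also have "\<dots> \<le> k * ((real (card (UNIV :: 'a set)))\<^sup>2 * exp (- \<beta> * S))"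
    unfolding k_def by (intro mult_left_mono pc) simp
  finally have "p * (q_min * exp (- \<beta> * path_height H \<omega>))
      \<le> k * ((real (card (UNIV :: 'a set)))\<^sup>2 * exp (- \<beta> * S))" .
  then have "p \<le> k * (real (card (UNIV :: 'a set)))\<^sup>2 / q_min * (exp (- \<beta> * S) / exp (- \<beta> * path_height H \<omega>))"
    using q_min_pos by (simp add: field_simps)
  also have "exp (- \<beta> * S) / exp (- \<beta> * path_height H \<omega>) = exp (- \<beta> * (S - path_height H \<omega>))"
    by (simp add: exp_diff[symmetric] algebra_simps)
  finally show ?thesis unfolding p_def k_def .
qed

section \<open>Initial cycles and their depths\<close>

lemma mem_initial_cycle: "z \<in> initial_cycle H q A z"
  unfolding initial_cycle_def by simp

lemma initial_cycle_disjoint: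
  assumes "z \<notin> A" shows "initial_cycle H q A z \<inter> A = {}"
proof -
  have "\<not> Phi z a < Phi_set {z} A" if "a \<in> A" for a using Phi_set_le[of z "{z}" a A] that by simp
  then show ?thesis using assms unfolding initial_cycle_def by auto
qed

lemma Phi_less_if_mem_initial_cycle:
  "b \<in> initial_cycle H q A z \<Longrightarrow> b \<noteq> z \<Longrightarrow> Phi z b < Phi_set {z} A"
  unfolding initial_cycle_def by auto

lemma Phi_set_le_initial_cycle_exit:
  assumes "z \<notin> A" "A \<noteq> {}"
  defines "C \<equiv> initial_cycle H q A z"
  shows "Phi_set {z} A \<le> Phi_set C (- C)"
proof (rule Phi_set_ge)
  show "C \<noteq> {}" using mem_initial_cycle C_def by blast
  show "- C \<noteq> {}" using initial_cycle_disjoint[OF assms(1)] assms(2) C_def by blast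
  fix c y assume c: "c \<in> C" and y: "y \<in> - C"
  show "Phi_set {z} A \<le> Phi c y"
  proof (rule ccontr)
    assume "\<not> Phi_set {z} A \<le> Phi c y"
    moreover have "c = z \<or> Phi z c < Phi_set {z} A"
      using Phi_less_if_mem_initial_cycle c C_def by blast
    ultimately have "Phi z y < Phi_set {z} A" using Phi_trans[of z y c] by auto
    then show False using y unfolding C_def initial_cycle_def by simp
  qed
qed

lemma initial_cycle_edge_level:
  assumes "c \<in> initial_cycle H q A z" "y \<notin> initial_cycle H q A z" "q c y > 0"
  shows "Phi_set (initial_cycle H q A z) (- initial_cycle H q A z) \<le> max (H c) (H y)"
  using Phi_set_le[of c _ y] Phi_le_edge[OF assms(3)] assms(1,2) by (meson ComplI order_trans)

lemma Gamma_eq: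
  "z \<notin> A \<Longrightarrow> Gamma H q z A = Phi_set (initial_cycle H q A z) (- initial_cycle H q A z)
     - Min (H ` initial_cycle H q A z)"
  unfolding Gamma_def depth_def by simp

lemma Gamma_ge:
  assumes "z \<notin> A" "A \<noteq> {}"
  shows "Phi_set {z} A - H z \<le> Gamma H q z A"
proof -
  have "Min (H ` initial_cycle H q A z) \<le> H z"
    using mem_initial_cycle by (intro Min_le) auto
  then show ?thesis using Gamma_eq[OF assms(1)] Phi_set_le_initial_cycle_exit[OF assms] by linarith
qed

lemma Gamma_nonneg:
  assumes "A \<noteq> {}" shows "0 \<le> Gamma H q z A"
proof (cases "z \<in> A")
  case False
  then show ?thesis using Gamma_ge[OF False assms] H_le_Phi_set[OF assms, of z] by linarith
qed (simp add: Gamma_def)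

lemma finite_opt_path_values:
  "finite ((\<lambda>\<omega>. Max ((\<lambda>z. Gamma H q z A) ` set \<omega>)) ` opt_paths H q x A)"
  by (rule finite_subset[of _ "Max ` Pow (range (\<lambda>z. Gamma H q z A))"]) auto

lemma Psi_min_le:
  "\<omega> \<in> opt_paths H q x A \<Longrightarrow> Psi_min H q x A \<le> Max ((\<lambda>z. Gamma H q z A) ` set \<omega>)"
  unfolding Psi_min_def by (rule Min_le[OF finite_opt_path_values]) auto

lemma Gamma_le_Psi_max:
  assumes "\<omega> \<in> opt_paths H q x A" "w \<in> set \<omega>"
  shows "Gamma H q w A \<le> Psi_max H q x A"
proof -
  have "Gamma H q w A \<le> Max ((\<lambda>z. Gamma H q z A) ` set \<omega>)"
    using assms(2) by (intro Max_ge) auto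
  also have "\<dots> \<le> Psi_max H q x A"
    unfolding Psi_max_def using assms(1) by (intro Max_ge[OF finite_opt_path_values]) auto
  finally show ?thesis .
qed

text \<open>Leaving a cycle from its bottom \<open>b\<close>: the time-\<open>n\<close> exit probability is at most \<open>n\<close> times the
  flux out of the cycle, relative to the Gibbs weight of \<open>b\<close>.\<close>

lemma hit_exit_initial_cycle_from_bottom_le:
  assumes \<beta>: "\<beta> \<ge> 0" and z: "z \<notin> A"
    and b: "b \<in> initial_cycle H q A z" "H b = Min (H ` initial_cycle H q A z)"
  shows "hit (metro H q \<beta>) (- initial_cycle H q A z) {} n b
    \<le> real n * (real (card (UNIV :: 'a set)))\<^sup>2 * exp (- \<beta> * Gamma H q z A)"
proof -
  interpret reversible_chain "metro H q \<beta>" "\<lambda>y. exp (- \<beta> * H y)"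
    using metro_reversible_chain[OF \<beta>] .
  define C where "C = initial_cycle H q A z"
  define S where "S = Phi_set C (- C)"
  have depth: "S - H b = Gamma H q z A"
    using Gamma_eq[OF z] b(2) unfolding S_def C_def by simp
  have "exp (- \<beta> * H b) * hit (metro H q \<beta>) (- C) {} n b
      \<le> real n * flux (metro H q \<beta>) (\<lambda>y. exp (- \<beta> * H y)) C (- C)"
    using mu_hit_exit_le_flux b(1) unfolding C_def by blast
  also have "\<dots> \<le> real n * ((real (card (UNIV :: 'a set)))\<^sup>2 * exp (- \<beta> * S))"
    unfolding S_def C_def by (intro mult_left_mono flux_metro_le[OF \<beta>]) (auto intro: initial_cycle_edge_level)
  finally have "hit (metro H q \<beta>) (- C) {} n b
      \<le> real n * (real (card (UNIV :: 'a set)))\<^sup>2 * (exp (- \<beta> * S) / exp (- \<beta> * H b))"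
    by (simp add: field_simps)
  also have "exp (- \<beta> * S) / exp (- \<beta> * H b) = exp (- \<beta> * Gamma H q z A)"
    using depth by (auto simp: exp_diff[symmetric] algebra_simps)
  finally show ?thesis unfolding C_def by simp
qed

text \<open>The chain started at \<open>z\<close> either leaves its initial cycle before visiting the bottom \<open>b\<close>,
  which means climbing from \<open>Phi z b\<close> to the exit height and is exponentially unlikely, or it
  first visits \<open>b\<close> and leaves from there.\<close>

lemma hit_exit_initial_cycle_le:
  assumes z: "z \<notin> A" and A: "A \<noteq> {}"
  obtains K d where "d > 0" "\<And>\<beta> n. \<beta> \<ge> 0 \<Longrightarrow> hit (metro H q \<beta>) (- initial_cycle H q A z) {} n z
      \<le> K * exp (- \<beta> * d) + real n * (real (card (UNIV :: 'a set)))\<^sup>2 * exp (- \<beta> * Gamma H q z A)"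
proof -
  define C where "C = initial_cycle H q A z"
  define S where "S = Phi_set C (- C)"
  have "z \<in> C" unfolding C_def by (rule mem_initial_cycle)
  obtain b where b: "b \<in> C" "H b = Min (H ` C)"
    using Min_in[of "H ` C"] \<open>z \<in> C\<close> by fastforce
  note bottom = hit_exit_initial_cycle_from_bottom_le[OF _ z b[unfolded C_def]]
  show ?thesis
  proof (cases "b = z")
    case True
    with bottom show ?thesis by (intro that[of 1 0]) (auto simp: C_def)
  next
    case False
    obtain \<omega> where \<omega>: "path_from_to q \<omega> z b" "path_height H \<omega> = Phi z b" using Phi_attained by blast
    define K where "K = 2 * (real (length \<omega> - 1))\<^sup>2 * (real (card (UNIV :: 'a set)))\<^sup>2 / q_min"
    have "Phi z b < S"
      using Phi_less_if_mem_initial_cycle[of b A z] b(1) False Phi_set_le_initial_cycle_exit[OF z A]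
      unfolding S_def C_def by simp
    moreover have "hit (metro H q \<beta>) (- C) {} n z \<le> K * exp (- \<beta> * (S - Phi z b))
        + real n * (real (card (UNIV :: 'a set)))\<^sup>2 * exp (- \<beta> * Gamma H q z A)" if \<beta>: "\<beta> \<ge> 0" for \<beta> n
    proof -
      interpret reversible_chain "metro H q \<beta>" "\<lambda>y. exp (- \<beta> * H y)"
        using metro_reversible_chain[OF \<beta>] .
      have "hit (metro H q \<beta>) (- C) {} n z
          \<le> hit (metro H q \<beta>) (- C) {b} n z + hit (metro H q \<beta>) {b} (- C) n z * hit (metro H q \<beta>) (- C) {} n b"
        using hit_split_first_visit[of "- C" "{}" n z "{b}"] by simp
      also have "\<dots> \<le> hit_ever (metro H q \<beta>) (- C) {b} z + 1 * hit (metro H q \<beta>) (- C) {} n b"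
        by (intro add_mono mult_right_mono hit_le_hit_ever hit_le_one hit_nonneg)
      also have "hit_ever (metro H q \<beta>) (- C) {b} z \<le> K * exp (- \<beta> * (S - path_height H \<omega>))"
        unfolding K_def S_def
        by (rule hit_ever_across_level_le[OF \<beta> \<open>z \<in> C\<close> _ _ _ _ _ \<omega>(1)])
           (use False b(1) in \<open>auto simp: C_def intro: initial_cycle_edge_level\<close>)
      finally show ?thesis using bottom[OF \<beta>, of n] \<omega>(2) by (simp add: C_def)
    qed
    ultimately show ?thesis unfolding C_def by (intro that) auto
  qed
qed

end

section \<open>Exponentially small functions of \<open>\<beta>\<close>\<close>

definition exp_small :: "(real \<Rightarrow> real) \<Rightarrow> bool" where
  "exp_small f \<longleftrightarrow> (\<exists>\<kappa>>0. \<forall>\<^sub>F \<beta> in at_top. f \<beta> \<le> exp (- \<kappa> * \<beta>))"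

lemma exp_small_le:
  assumes "exp_small g" "\<forall>\<^sub>F \<beta> in at_top. f \<beta> \<le> g \<beta>"
  shows "exp_small f"
proof -
  obtain \<kappa> where "\<kappa> > 0" and g: "\<forall>\<^sub>F \<beta> in at_top. g \<beta> \<le> exp (- \<kappa> * \<beta>)"
    using assms(1) unfolding exp_small_def by blast
  from assms(2) g have "\<forall>\<^sub>F \<beta> in at_top. f \<beta> \<le> exp (- \<kappa> * \<beta>)"
    by eventually_elim (rule order_trans)
  with \<open>\<kappa> > 0\<close> show ?thesis unfolding exp_small_def by blast
qed

lemma exp_small_const_mult_exp:
  assumes "d > 0"
  shows "exp_small (\<lambda>\<beta>. K * exp (- \<beta> * d))"
  unfolding exp_small_def
proof (intro exI conjI)
  show "d / 2 > 0" using assms by simp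
  have "\<forall>\<^sub>F \<beta> in at_top. 2 * ln (\<bar>K\<bar> + 1) / d < (\<beta>::real)" by (rule eventually_gt_at_top)
  then show "\<forall>\<^sub>F \<beta> in at_top. K * exp (- \<beta> * d) \<le> exp (- (d / 2) * \<beta>)"
  proof (rule eventually_mono)
    fix \<beta> :: real assume "2 * ln (\<bar>K\<bar> + 1) / d < \<beta>"
    then have "ln (\<bar>K\<bar> + 1) < \<beta> * d / 2" using assms by (simp add: field_simps)
    then have "K < exp (\<beta> * d / 2)"
      by (smt (verit) exp_less_cancel_iff exp_ln)
    then have "K * exp (- (d / 2) * \<beta>) * exp (- (d / 2) * \<beta>)
        \<le> exp (\<beta> * d / 2) * exp (- (d / 2) * \<beta>) * exp (- (d / 2) * \<beta>)"
      by (intro mult_right_mono) auto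
    then show "K * exp (- \<beta> * d) \<le> exp (- (d / 2) * \<beta>)"
      by (simp add: exp_add[symmetric] algebra_simps)
  qed
qed

lemma exp_small_add:
  assumes "exp_small f" "exp_small g"
  shows "exp_small (\<lambda>\<beta>. f \<beta> + g \<beta>)"
proof -
  obtain \<kappa>1 \<kappa>2 where \<kappa>: "\<kappa>1 > 0" "\<kappa>2 > 0"
    and f: "\<forall>\<^sub>F \<beta> in at_top. f \<beta> \<le> exp (- \<kappa>1 * \<beta>)" and g: "\<forall>\<^sub>F \<beta> in at_top. g \<beta> \<le> exp (- \<kappa>2 * \<beta>)"
    using assms unfolding exp_small_def by blast
  have "\<forall>\<^sub>F \<beta> in at_top. (0::real) \<le> \<beta>" by (rule eventually_ge_at_top)
  with f g have sum_le: "\<forall>\<^sub>F \<beta> in at_top. f \<beta> + g \<beta> \<le> 2 * exp (- \<beta> * min \<kappa>1 \<kappa>2)"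
  proof eventually_elim
    case (elim \<beta>)
    have "\<beta> * min \<kappa>1 \<kappa>2 \<le> \<kappa>1 * \<beta>" "\<beta> * min \<kappa>1 \<kappa>2 \<le> \<kappa>2 * \<beta>"
      using elim(3) by (metis min.cobounded1 min.cobounded2 mult.commute mult_left_mono)+
    then have "exp (- \<kappa>1 * \<beta>) \<le> exp (- \<beta> * min \<kappa>1 \<kappa>2)" "exp (- \<kappa>2 * \<beta>) \<le> exp (- \<beta> * min \<kappa>1 \<kappa>2)"
      by simp_all
    with elim show ?case by linarith
  qed
  have "exp_small (\<lambda>\<beta>. 2 * exp (- \<beta> * min \<kappa>1 \<kappa>2))"
    using \<kappa> by (intro exp_small_const_mult_exp) simp
  from this sum_le show ?thesis by (rule exp_small_le)
qed

lemma exp_small_sum: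
  assumes "finite I" "\<And>i. i \<in> I \<Longrightarrow> exp_small (f i)"
  shows "exp_small (\<lambda>\<beta>. \<Sum>i\<in>I. f i \<beta>)"
  using assms
proof (induction I rule: finite_induct)
  case empty
  show ?case unfolding exp_small_def by (intro exI[of _ 1]) auto
qed (simp add: exp_small_add)

lemma exp_small_both_less_exp:
  assumes "exp_small f" "exp_small g"
  shows "\<exists>\<kappa>>0. \<forall>\<^sub>F \<beta> in at_top. f \<beta> < exp (- \<kappa> * \<beta>) \<and> g \<beta> < exp (- \<kappa> * \<beta>)"
proof -
  obtain \<kappa>1 \<kappa>2 where \<kappa>: "\<kappa>1 > 0" "\<kappa>2 > 0"
    and f: "\<forall>\<^sub>F \<beta> in at_top. f \<beta> \<le> exp (- \<kappa>1 * \<beta>)" and g: "\<forall>\<^sub>F \<beta> in at_top. g \<beta> \<le> exp (- \<kappa>2 * \<beta>)"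
    using assms unfolding exp_small_def by blast
  define \<kappa> where "\<kappa> = min \<kappa>1 \<kappa>2 / 2"
  have "0 < \<kappa>" "\<kappa> < \<kappa>1" "\<kappa> < \<kappa>2" using \<kappa> unfolding \<kappa>_def by auto
  have "\<forall>\<^sub>F \<beta> in at_top. (0::real) < \<beta>" by (rule eventually_gt_at_top)
  with f g have "\<forall>\<^sub>F \<beta> in at_top. f \<beta> < exp (- \<kappa> * \<beta>) \<and> g \<beta> < exp (- \<kappa> * \<beta>)"
  proof eventually_elim
    case (elim \<beta>)
    have "\<kappa> * \<beta> < \<kappa>1 * \<beta>" "\<kappa> * \<beta> < \<kappa>2 * \<beta>"
      using elim(3) \<open>\<kappa> < \<kappa>1\<close> \<open>\<kappa> < \<kappa>2\<close> by (simp_all add: mult_strict_right_mono)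
    then have "exp (- \<kappa>1 * \<beta>) < exp (- \<kappa> * \<beta>)" "exp (- \<kappa>2 * \<beta>) < exp (- \<kappa> * \<beta>)"
      by simp_all
    with elim show ?case by linarith
  qed
  with \<open>0 < \<kappa>\<close> show ?thesis by blast
qed

section \<open>Hitting a set from a given state\<close>

locale hitting_problem = landscape +
  fixes A :: "'a set" and x :: 'a
  assumes A_nonempty: "A \<noteq> {}" and x_notin_A: "x \<notin> A"
begin

definition Phi_x :: real where
  "Phi_x = Phi_set {x} A"

definition basin :: "'a set" where
  "basin = {y. y \<notin> A \<and> (\<exists>\<omega>. path_from_to q \<omega> x y \<and> set \<omega> \<inter> A = {} \<and> path_height H \<omega> \<le> Phi_x)}"

definition low_targets :: "'a set" where
  "low_targets = {a \<in> A. H a \<le> Phi_x}"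

definition escape_set :: "'a set" where
  "escape_set = - (basin \<union> low_targets)"

text \<open>The smallest energy gap above \<open>Phi_x\<close>; the 1 only matters if no state lies above \<open>Phi_x\<close>.\<close>

definition level_gap :: real where
  "level_gap = Min (insert 1 {H y - Phi_x | y. Phi_x < H y})"

lemma x_in_basin: "x \<in> basin"
proof -
  have "path_from_to q [x] x x" unfolding path_from_to_def by simp
  moreover have "H x \<le> Phi_x" unfolding Phi_x_def by (rule H_le_Phi_set[OF A_nonempty])
  ultimately show ?thesis
    unfolding basin_def using x_notin_A by (intro CollectI conjI exI[of _ "[x]"]) auto
qed

lemma H_le_Phi_x_on_basin: "y \<in> basin \<Longrightarrow> H y \<le> Phi_x"
  unfolding basin_def path_from_to_def
  by (auto dest: is_path_nonempty path_height_ge[OF last_in_set] intro: order_trans)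

lemma basin_disjoint_A: "basin \<inter> A = {}"
  unfolding basin_def by auto

lemma finite_level_gaps: "finite (insert 1 {H y - Phi_x | y. Phi_x < H y})"
  by (rule finite.insertI, rule finite_subset[of _ "(\<lambda>y. H y - Phi_x) ` UNIV"]) auto

lemma level_gap_pos: "level_gap > 0"
  unfolding level_gap_def using finite_level_gaps by (subst Min_gr_iff) auto

lemma level_gap_le: "Phi_x < H y \<Longrightarrow> Phi_x + level_gap \<le> H y"
proof -
  assume "Phi_x < H y"
  then have "level_gap \<le> H y - Phi_x" unfolding level_gap_def by (intro Min_le finite_level_gaps) auto
  then show ?thesis by simp
qed

lemma escape_edge_level:
  assumes c: "c \<in> basin" and y: "y \<in> escape_set" and "q c y > 0"
  shows "Phi_x + level_gap \<le> max (H c) (H y)"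
proof (cases "Phi_x < H y")
  case True
  then show ?thesis using level_gap_le[of y] by (simp add: max.coboundedI2)
next
  case False
  obtain \<omega> where \<omega>: "path_from_to q \<omega> x c" "set \<omega> \<inter> A = {}" "path_height H \<omega> \<le> Phi_x"
    using c unfolding basin_def by auto
  have "y \<notin> low_targets" using y unfolding escape_set_def by simp
  with False have "y \<notin> A" unfolding low_targets_def by simp
  have "path_from_to q (\<omega> @ [y]) x y"
    using \<omega>(1) \<open>q c y > 0\<close> is_path_append[of q \<omega> "[y]"] path_from_to_nonempty[OF \<omega>(1)]
    unfolding path_from_to_def by auto
  moreover have "path_height H (\<omega> @ [y]) \<le> Phi_x"
    using \<omega>(3) False path_height_le_iff[of \<omega> H] path_from_to_nonempty[OF \<omega>(1)]
    by (subst path_height_le_iff) auto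
  ultimately have "y \<in> basin"
    unfolding basin_def using \<omega>(2) \<open>y \<notin> A\<close> by (intro CollectI conjI exI[of _ "\<omega> @ [y]"]) auto
  then show ?thesis using y unfolding escape_set_def by simp
qed

lemma Phi_x_le_first_hit_path: "\<omega> \<in> first_hit_paths q x A \<Longrightarrow> Phi_x \<le> path_height H \<omega>"
  unfolding Phi_x_def first_hit_paths_def
  by (metis (mono_tags, lifting) Phi_le_path_height Phi_set_le dual_order.trans
      mem_Collect_eq path_from_to_def singletonI)

lemma mem_opt_paths:
  "\<omega> \<in> first_hit_paths q x A \<Longrightarrow> path_height H \<omega> \<le> Phi_x \<Longrightarrow> \<omega> \<in> opt_paths H q x A"
  using Phi_x_le_first_hit_path unfolding opt_paths_def Phi_x_def by fastforce

lemma basin_on_opt_paths: "w \<in> basin \<Longrightarrow> \<exists>\<omega>\<in>opt_paths H q x A. w \<in> set \<omega>"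
proof -
  assume "w \<in> basin"
  then obtain \<omega>1 where \<omega>1: "path_from_to q \<omega>1 x w" "set \<omega>1 \<inter> A = {}" "path_height H \<omega>1 \<le> Phi_x"
    unfolding basin_def by auto
  obtain \<omega>2 a where \<omega>2: "path_from_to q \<omega>2 x a" "a \<in> A" "path_height H \<omega>2 = Phi_x"
    using optimal_path_to_set[OF A_nonempty] unfolding Phi_x_def by blast
  define loop where "loop = \<omega>1 @ tl (rev \<omega>1)"
  have loop: "path_from_to q loop x x" "set loop \<subseteq> set \<omega>1"
    using path_from_to_join[OF \<omega>1(1) path_from_to_rev[OF \<omega>1(1)]] unfolding loop_def by auto
  have "a \<noteq> x" using \<omega>2(2) x_notin_A by auto
  then have "tl \<omega>2 \<noteq> []" "a \<in> set (tl \<omega>2)"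
    using \<omega>2(1) path_from_to_nonempty[OF \<omega>2(1)] unfolding path_from_to_def
    by (metis last_ConsL last_in_set last_tl list.collapse)+
  have "path_from_to q (loop @ tl \<omega>2) x a" by (rule path_from_to_join(1)[OF loop(1) \<omega>2(1)])
  then obtain \<omega> where \<omega>: "\<omega> \<in> first_hit_paths q x A" "set loop \<subseteq> set \<omega>" "set \<omega> \<subseteq> set (loop @ tl \<omega>2)"
    using first_hit_path_within[of q loop "tl \<omega>2" x A] \<open>a \<in> set (tl \<omega>2)\<close> \<omega>2(2) loop(2) \<omega>1(2)
    unfolding path_from_to_def by blast
  have "\<forall>v\<in>set (loop @ tl \<omega>2). H v \<le> Phi_x"
  proof
    fix v assume "v \<in> set (loop @ tl \<omega>2)"
    then have "v \<in> set \<omega>1 \<or> v \<in> set \<omega>2"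
      using loop(2) list.set_sel(2)[OF path_from_to_nonempty[OF \<omega>2(1)]] by auto
    then show "H v \<le> Phi_x"
      using path_height_ge[of v _ H] \<omega>1(3) \<omega>2(3) by (metis order_trans)
  qed
  moreover have "\<omega> \<noteq> []" using \<omega>(1) is_path_nonempty unfolding first_hit_paths_def by blast
  ultimately have "path_height H \<omega> \<le> Phi_x"
    unfolding path_height_le_iff[OF \<open>\<omega> \<noteq> []\<close>] using \<omega>(3) by blast
  moreover have "w \<in> set \<omega>"
    using \<omega>(2) path_from_to_nonempty[OF \<omega>1(1)] \<omega>1(1) unfolding loop_def path_from_to_def by auto
  ultimately show ?thesis using mem_opt_paths[OF \<omega>(1)] by blast
qed

lemma Gamma_le_Psi_max_on_basin: "w \<in> basin \<Longrightarrow> Gamma H q w A \<le> Psi_max H q x A"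
  using basin_on_opt_paths Gamma_le_Psi_max by blast

lemma Psi_max_nonneg: "0 \<le> Psi_max H q x A"
  using Gamma_nonneg[OF A_nonempty, of x] Gamma_le_Psi_max_on_basin[OF x_in_basin] by linarith

lemma escape_exp_small: "exp_small (\<lambda>\<beta>. hit_ever (metro H q \<beta>) escape_set low_targets x)"
proof -
  obtain \<omega> a where \<omega>: "path_from_to q \<omega> x a" "a \<in> A" "path_height H \<omega> = Phi_x"
    using optimal_path_to_set[OF A_nonempty] unfolding Phi_x_def by blast
  have "a \<in> set \<omega>" using \<omega>(1) path_from_to_nonempty[OF \<omega>(1)] unfolding path_from_to_def by auto
  then have "a \<in> low_targets" using \<omega>(2,3) path_height_ge[of a \<omega> H] unfolding low_targets_def by simp
  define K where "K = 2 * (real (length \<omega> - 1))\<^sup>2 * (real (card (UNIV :: 'a set)))\<^sup>2 / q_min"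
  have "hit_ever (metro H q \<beta>) escape_set low_targets x \<le> K * exp (- \<beta> * level_gap)" if "\<beta> \<ge> 0" for \<beta>
  proof -
    have "hit_ever (metro H q \<beta>) escape_set low_targets x
        \<le> K * exp (- \<beta> * (Phi_x + level_gap - path_height H \<omega>))"
      unfolding K_def
    proof (rule hit_ever_across_level_le[OF that x_in_basin _ _ _ _ escape_edge_level \<omega>(1) \<open>a \<in> low_targets\<close>])
      show "escape_set \<inter> basin = {}" "- basin - escape_set \<subseteq> low_targets" "escape_set \<inter> low_targets = {}"
        unfolding escape_set_def by auto
      show "x \<notin> low_targets" using x_notin_A unfolding low_targets_def by simp
    qed
    then show ?thesis using \<omega>(3) by simp
  qed
  then have "\<forall>\<^sub>F \<beta> in at_top. hit_ever (metro H q \<beta>) escape_set low_targets x \<le> K * exp (- \<beta> * level_gap)"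
    using eventually_ge_at_top[of 0] by (rule eventually_mono[rotated])
  then show ?thesis by (rule exp_small_le[OF exp_small_const_mult_exp[OF level_gap_pos]])
qed

definition deep_states :: "'a set" where
  "deep_states = {z \<in> basin. Psi_min H q x A \<le> Gamma H q z A}"

definition shallow_route :: "'a \<Rightarrow> bool" where
  "shallow_route w \<longleftrightarrow> (\<exists>\<omega>. is_path q \<omega> \<and> hd \<omega> = w \<and> last \<omega> \<in> low_targets
     \<and> set (butlast \<omega>) \<subseteq> basin - deep_states)"

lemma no_shallow_route_from_x:
  assumes "Psi_min H q x A > 0"
  shows "\<not> shallow_route x"
proof
  assume "shallow_route x"
  then obtain \<omega> where \<omega>: "is_path q \<omega>" "hd \<omega> = x" "last \<omega> \<in> low_targets"
    "set (butlast \<omega>) \<subseteq> basin - deep_states"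
    unfolding shallow_route_def by blast
  have "\<omega> \<noteq> []" using \<omega>(1) by (rule is_path_nonempty)
  then have "set \<omega> = set (butlast \<omega> @ [last \<omega>])" by simp
  then have set_\<omega>: "set \<omega> = insert (last \<omega>) (set (butlast \<omega>))" by simp
  have "\<omega> \<in> first_hit_paths q x A"
    using \<omega> basin_disjoint_A unfolding first_hit_paths_iff low_targets_def by auto
  moreover have "path_height H \<omega> \<le> Phi_x"
    using \<omega>(3,4) H_le_Phi_x_on_basin unfolding path_height_le_iff[OF \<open>\<omega> \<noteq> []\<close>] set_\<omega> low_targets_def
    by auto
  ultimately have "Psi_min H q x A \<le> Max ((\<lambda>z. Gamma H q z A) ` set \<omega>)"
    by (intro Psi_min_le mem_opt_paths)
  moreover have "Gamma H q z A < Psi_min H q x A" if "z \<in> set \<omega>" for z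
    using that \<omega>(3,4) assms unfolding set_\<omega> deep_states_def low_targets_def Gamma_def by auto
  ultimately show False
    using Max_in[of "(\<lambda>z. Gamma H q z A) ` set \<omega>"] \<open>\<omega> \<noteq> []\<close> by fastforce
qed

text \<open>Without passing through a deep state, the chain cannot reach the low part of \<open>A\<close> before
  escaping: states of the basin without a shallow route are closed under the dynamics.\<close>

lemma hit_low_avoiding_deep_eq_0:
  assumes "Psi_min H q x A > 0" "x \<notin> deep_states"
  shows "hit (metro H q \<beta>) low_targets (escape_set \<union> deep_states) n x = 0"
proof (rule hit_eq_0_if_closed)
  define W where "W = {w \<in> basin - deep_states. \<not> shallow_route w}"
  show "x \<in> W" unfolding W_def using x_in_basin assms no_shallow_route_from_x by blast
  show "W \<inter> low_targets = {}" unfolding W_def low_targets_def using basin_disjoint_A by auto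
  fix u v assume u: "u \<in> W" and "metro H q \<beta> u v \<noteq> 0"
  show "v \<in> W \<union> (escape_set \<union> deep_states - low_targets)"
  proof (cases "u = v")
    case False
    then have "q u v > 0" using q_pos_if_metro_nonzero \<open>metro H q \<beta> u v \<noteq> 0\<close> by blast
    have route_Cons: "shallow_route u" if "is_path q \<omega>" "hd \<omega> = v" "last \<omega> \<in> low_targets"
        "set (butlast \<omega>) \<subseteq> basin - deep_states" for \<omega>
      unfolding shallow_route_def using that u \<open>q u v > 0\<close> is_path_nonempty[OF that(1)] W_def
      by (intro exI[of _ "u # \<omega>"]) (auto simp: is_path_Cons)
    have "v \<notin> low_targets" using route_Cons[of "[v]"] u unfolding W_def by auto
    moreover have "\<not> shallow_route v" using route_Cons u unfolding W_def shallow_route_def by blast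
    ultimately show ?thesis unfolding W_def escape_set_def by auto
  qed (use u in auto)
qed

lemma hit_low_before_escape_le_deep_exits:
  assumes \<beta>: "\<beta> \<ge> 0" and "Psi_min H q x A > 0"
  shows "hit (metro H q \<beta>) low_targets escape_set n x
    \<le> (\<Sum>z\<in>deep_states. hit (metro H q \<beta>) (- initial_cycle H q A z) {} n z)"
proof -
  interpret reversible_chain "metro H q \<beta>" "\<lambda>y. exp (- \<beta> * H y)"
    using metro_reversible_chain[OF \<beta>] .
  have exit: "hit (metro H q \<beta>) low_targets escape_set n z \<le> hit (metro H q \<beta>) (- initial_cycle H q A z) {} n z"
    if "z \<in> deep_states" for z
    using that initial_cycle_disjoint[of z A] basin_disjoint_A
    unfolding deep_states_def low_targets_def by (intro hit_mono_sets) auto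
  show ?thesis
  proof (cases "x \<in> deep_states")
    case True
    with exit[of x] show ?thesis
      by (meson order_trans member_le_sum finite hit_nonneg)
  next
    case False
    have "hit (metro H q \<beta>) low_targets escape_set n x
        \<le> hit (metro H q \<beta>) low_targets (escape_set \<union> deep_states) n x + (\<Sum>z\<in>deep_states.
          hit (metro H q \<beta>) {z} (low_targets \<union> escape_set \<union> (deep_states - {z})) n x
          * hit (metro H q \<beta>) low_targets escape_set n z)"
      by (rule hit_split_first_visit)
    also have "\<dots> \<le> 0 + (\<Sum>z\<in>deep_states. 1 * hit (metro H q \<beta>) (- initial_cycle H q A z) {} n z)"
      using hit_low_avoiding_deep_eq_0[OF assms(2) False]
      by (intro add_mono sum_mono mult_mono hit_le_one exit) (auto simp: hit_nonneg)
    finally show ?thesis by simp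
  qed
qed

lemma hit_A_le_deep_exits_plus_escape:
  assumes \<beta>: "\<beta> \<ge> 0" and "Psi_min H q x A > 0"
  shows "hit (metro H q \<beta>) A {} n x
    \<le> (\<Sum>z\<in>deep_states. hit (metro H q \<beta>) (- initial_cycle H q A z) {} n z)
      + hit_ever (metro H q \<beta>) escape_set low_targets x"
proof -
  interpret reversible_chain "metro H q \<beta>" "\<lambda>y. exp (- \<beta> * H y)"
    using metro_reversible_chain[OF \<beta>] .
  have "hit (metro H q \<beta>) A {} n x \<le> hit (metro H q \<beta>) (low_targets \<union> escape_set) {} n x"
    using basin_disjoint_A by (intro hit_mono_sets) (auto simp: escape_set_def)
  also have "\<dots> = hit (metro H q \<beta>) low_targets escape_set n x + hit (metro H q \<beta>) escape_set low_targets n x"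
    using hit_union_target[of low_targets escape_set "{}" n x] by (simp add: escape_set_def)
  also have "\<dots> \<le> (\<Sum>z\<in>deep_states. hit (metro H q \<beta>) (- initial_cycle H q A z) {} n z)
      + hit_ever (metro H q \<beta>) escape_set low_targets x"
    by (intro add_mono hit_low_before_escape_le_deep_exits[OF assms] hit_le_hit_ever)
  finally show ?thesis .
qed

lemma deep_exit_exp_small:
  assumes z: "z \<in> deep_states" and "\<epsilon> > 0"
    and N: "\<And>\<beta>. real (N \<beta>) \<le> exp (\<beta> * (Psi_min H q x A - \<epsilon>))"
  shows "exp_small (\<lambda>\<beta>. hit (metro H q \<beta>) (- initial_cycle H q A z) {} (N \<beta>) z)"
proof -
  let ?c = "(real (card (UNIV :: 'a set)))\<^sup>2"
  have "z \<notin> A" using z basin_disjoint_A unfolding deep_states_def by auto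
  then obtain K d where "d > 0" and exit: "\<And>\<beta> n. \<beta> \<ge> 0 \<Longrightarrow> hit (metro H q \<beta>) (- initial_cycle H q A z) {} n z
      \<le> K * exp (- \<beta> * d) + real n * ?c * exp (- \<beta> * Gamma H q z A)"
    using hit_exit_initial_cycle_le A_nonempty by metis
  have bound: "hit (metro H q \<beta>) (- initial_cycle H q A z) {} (N \<beta>) z \<le> K * exp (- \<beta> * d) + ?c * exp (- \<beta> * \<epsilon>)"
    if "\<beta> \<ge> 0" for \<beta>
  proof -
    have "real (N \<beta>) * exp (- \<beta> * Gamma H q z A)
        \<le> exp (\<beta> * (Psi_min H q x A - \<epsilon>)) * exp (- \<beta> * Psi_min H q x A)"
      using z that by (intro mult_mono N) (auto simp: deep_states_def mult_left_mono)
    also have "\<dots> = exp (- \<beta> * \<epsilon>)" by (simp add: exp_add[symmetric] algebra_simps)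
    finally have "?c * (real (N \<beta>) * exp (- \<beta> * Gamma H q z A)) \<le> ?c * exp (- \<beta> * \<epsilon>)"
      by (intro mult_left_mono) auto
    moreover have "real (N \<beta>) * ?c * exp (- \<beta> * Gamma H q z A) = ?c * (real (N \<beta>) * exp (- \<beta> * Gamma H q z A))"
      by (simp only: ac_simps)
    ultimately show ?thesis using exit[OF that, of "N \<beta>"] by linarith
  qed
  have "exp_small (\<lambda>\<beta>. K * exp (- \<beta> * d) + ?c * exp (- \<beta> * \<epsilon>))"
    using \<open>d > 0\<close> \<open>\<epsilon> > 0\<close> by (intro exp_small_add exp_small_const_mult_exp)
  moreover have "\<forall>\<^sub>F \<beta> in at_top. hit (metro H q \<beta>) (- initial_cycle H q A z) {} (N \<beta>) z
      \<le> K * exp (- \<beta> * d) + ?c * exp (- \<beta> * \<epsilon>)"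
    using eventually_ge_at_top[of 0] by (rule eventually_mono) (rule bound)
  ultimately show ?thesis by (rule exp_small_le)
qed

lemma prob_hit_before_exp_small:
  assumes "\<epsilon> > 0"
  shows "exp_small (\<lambda>\<beta>. prob_hit_before H q \<beta> A x (exp (\<beta> * (Psi_min H q x A - \<epsilon>))))"
proof -
  define T where "T \<beta> = exp (\<beta> * (Psi_min H q x A - \<epsilon>))" for \<beta>
  define N where "N \<beta> = nat (\<lceil>T \<beta>\<rceil> - 1)" for \<beta>
  have N: "real (N \<beta>) \<le> T \<beta>" for \<beta>
  proof -
    have "\<lceil>T \<beta>\<rceil> < T \<beta> + 1" by linarith
    then show ?thesis unfolding N_def by (cases "\<lceil>T \<beta>\<rceil> - 1 \<ge> 0") (auto simp: T_def)
  qed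
  have prob_eq: "prob_hit_before H q \<beta> A x (T \<beta>) = hit (metro H q \<beta>) A {} (N \<beta>) x" for \<beta>
    unfolding prob_hit_before_def N_def hit_le_eq_hit ..
  show ?thesis
  proof (cases "Psi_min H q x A \<le> \<epsilon>")
    case True
    have "prob_hit_before H q \<beta> A x (T \<beta>) \<le> 0 * exp (- \<beta> * 1)" if "\<beta> \<ge> 0" for \<beta>
    proof -
      have "T \<beta> \<le> 1" using that True by (simp add: T_def mult_nonneg_nonpos)
      then have "N \<beta> = 0" unfolding N_def by (simp add: ceiling_le_iff)
      then show ?thesis by (simp add: prob_eq)
    qed
    then have "\<forall>\<^sub>F \<beta> in at_top. prob_hit_before H q \<beta> A x (T \<beta>) \<le> 0 * exp (- \<beta> * 1)"
      using eventually_ge_at_top[of 0] by (rule eventually_mono[rotated])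
    from exp_small_const_mult_exp[of 1 0] this show ?thesis unfolding T_def by (rule exp_small_le) simp
  next
    case False
    have "exp_small (\<lambda>\<beta>. (\<Sum>z\<in>deep_states. hit (metro H q \<beta>) (- initial_cycle H q A z) {} (N \<beta>) z)
        + hit_ever (metro H q \<beta>) escape_set low_targets x)"
      using deep_exit_exp_small[OF _ assms N[unfolded T_def]]
      by (intro exp_small_add exp_small_sum escape_exp_small) auto
    moreover have "\<forall>\<^sub>F \<beta> in at_top. prob_hit_before H q \<beta> A x (T \<beta>)
        \<le> (\<Sum>z\<in>deep_states. hit (metro H q \<beta>) (- initial_cycle H q A z) {} (N \<beta>) z)
          + hit_ever (metro H q \<beta>) escape_set low_targets x"
      using eventually_ge_at_top[of 0] unfolding prob_eq
      by (rule eventually_mono) (use False assms in \<open>auto intro: hit_A_le_deep_exits_plus_escape\<close>)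
    ultimately show ?thesis unfolding T_def by (rule exp_small_le)
  qed
qed

text \<open>The escape probability from \<open>w\<close> out of the basin is bounded below by the capacity of an
  optimal path from \<open>w\<close> to \<open>A\<close>; its exponential rate \<open>Phi_set {w} A - H w\<close> is at most
  \<open>Gamma H q w A \<le> Psi_max H q x A\<close>, since \<open>w\<close> lies on an optimal path.\<close>

lemma escape_from_basin_ge:
  assumes w: "w \<in> basin"
  obtains c where "c > 0"
    "\<And>\<beta>. \<beta> \<ge> 0 \<Longrightarrow> c * exp (- \<beta> * Psi_max H q x A) \<le> hit_ever (metro H q \<beta>) (- basin) {w} w"
proof -
  obtain \<omega> a where \<omega>: "path_from_to q \<omega> w a" "a \<in> A" "path_height H \<omega> = Phi_set {w} A"
    using optimal_path_to_set[OF A_nonempty] by blast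
  define k where "k = 2 * (real (length \<omega> - 1))\<^sup>2"
  have "w \<notin> A" using w basin_disjoint_A by auto
  have rate: "Phi_set {w} A - H w \<le> Psi_max H q x A"
    using Gamma_ge[OF \<open>w \<notin> A\<close> A_nonempty] Gamma_le_Psi_max_on_basin[OF w] by linarith
  have cap: "q_min * exp (- \<beta> * Phi_set {w} A)
      \<le> k * (exp (- \<beta> * H w) * hit_ever (metro H q \<beta>) (- basin) {w} w)" if "\<beta> \<ge> 0" for \<beta>
    unfolding k_def using capacity_ge_path[OF that _ \<omega>(1)] \<omega> w basin_disjoint_A by auto
  have "k \<noteq> 0" using cap[of 0] q_min_pos by auto
  then have "k > 0" unfolding k_def by simp
  have "q_min / k * exp (- \<beta> * Psi_max H q x A) \<le> hit_ever (metro H q \<beta>) (- basin) {w} w"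
    if "\<beta> \<ge> 0" for \<beta>
  proof -
    have "exp (- \<beta> * Psi_max H q x A) \<le> exp (- \<beta> * (Phi_set {w} A - H w))"
      using rate that by (simp add: mult_left_mono)
    also have "\<dots> = exp (- \<beta> * Phi_set {w} A) / exp (- \<beta> * H w)"
      by (simp add: exp_diff[symmetric] algebra_simps)
    finally have "q_min / k * exp (- \<beta> * Psi_max H q x A)
        \<le> q_min * exp (- \<beta> * Phi_set {w} A) / (k * exp (- \<beta> * H w))"
      using q_min_pos \<open>k > 0\<close> by (simp add: field_simps)
    also have "\<dots> \<le> hit_ever (metro H q \<beta>) (- basin) {w} w"
      using cap[OF that] \<open>k > 0\<close> by (simp add: field_simps)
    finally show ?thesis .
  qed
  with that[of "q_min / k"] q_min_pos \<open>k > 0\<close> show ?thesis by simp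
qed

lemma mult_survival_in_basin_le:
  obtains K where "\<And>\<beta> n. \<beta> \<ge> 0 \<Longrightarrow>
    real n * (1 - hit (metro H q \<beta>) (- basin) {} n x) \<le> K * exp (\<beta> * Psi_max H q x A)"
proof -
  have "\<exists>c. c > 0 \<and> (\<forall>\<beta>\<ge>0. c * exp (- \<beta> * Psi_max H q x A) \<le> hit_ever (metro H q \<beta>) (- basin) {w} w)"
    if w: "w \<in> basin" for w
  proof -
    obtain c where "c > 0" "\<And>\<beta>. \<beta> \<ge> 0 \<Longrightarrow> c * exp (- \<beta> * Psi_max H q x A) \<le> hit_ever (metro H q \<beta>) (- basin) {w} w"
      using escape_from_basin_ge[OF w] by blast
    then show ?thesis by blast
  qed
  then have "\<forall>w\<in>basin. \<exists>c. c > 0 \<and> (\<forall>\<beta>\<ge>0. c * exp (- \<beta> * Psi_max H q x A) \<le> hit_ever (metro H q \<beta>) (- basin) {w} w)"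
    by blast
  from bchoice[OF this] obtain c where "\<forall>w\<in>basin. c w > 0 \<and>
      (\<forall>\<beta>\<ge>0. c w * exp (- \<beta> * Psi_max H q x A) \<le> hit_ever (metro H q \<beta>) (- basin) {w} w)"
    by blast
  then have c: "\<And>w. w \<in> basin \<Longrightarrow> c w > 0"
    "\<And>w \<beta>. w \<in> basin \<Longrightarrow> \<beta> \<ge> 0 \<Longrightarrow> c w * exp (- \<beta> * Psi_max H q x A) \<le> hit_ever (metro H q \<beta>) (- basin) {w} w"
    by blast+
  have "real n * (1 - hit (metro H q \<beta>) (- basin) {} n x) \<le> (\<Sum>w\<in>basin. 1 / c w) * exp (\<beta> * Psi_max H q x A)"
    if \<beta>: "\<beta> \<ge> 0" for \<beta> n
  proof -
    interpret reversible_chain "metro H q \<beta>" "\<lambda>y. exp (- \<beta> * H y)"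
      using metro_reversible_chain[OF \<beta>] .
    have escape_pos: "hit_ever (metro H q \<beta>) (- basin) {w} w > 0" if w: "w \<in> basin" for w
      using c(1)[OF w] c(2)[OF w \<beta>] by (meson exp_gt_zero mult_pos_pos less_le_trans)
    have "real n * (1 - hit (metro H q \<beta>) (- basin) {} n x)
        \<le> (\<Sum>w\<in>- (- basin). 1 / hit_ever (metro H q \<beta>) (- basin) {w} w)"
      by (rule mult_survival_le_sum_inverse_escape) (use x_in_basin escape_pos in auto)
    also have "\<dots> = (\<Sum>w\<in>basin. 1 / hit_ever (metro H q \<beta>) (- basin) {w} w)" by simp
    also have "\<dots> \<le> (\<Sum>w\<in>basin. 1 / c w * exp (\<beta> * Psi_max H q x A))"
    proof (intro sum_mono)
      fix w assume w: "w \<in> basin"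
      have "1 / hit_ever (metro H q \<beta>) (- basin) {w} w \<le> 1 / (c w * exp (- \<beta> * Psi_max H q x A))"
        using c(1)[OF w] c(2)[OF w \<beta>] escape_pos[OF w] by (intro divide_left_mono) auto
      then show "1 / hit_ever (metro H q \<beta>) (- basin) {w} w \<le> 1 / c w * exp (\<beta> * Psi_max H q x A)"
        by (simp add: exp_minus field_simps)
    qed
    finally show ?thesis by (simp add: sum_distrib_right)
  qed
  then show ?thesis by (rule that)
qed

lemma survival_le_basin_survival_plus_escape:
  assumes \<beta>: "\<beta> \<ge> 0"
  shows "1 - hit (metro H q \<beta>) A {} n x
    \<le> (1 - hit (metro H q \<beta>) (- basin) {} n x) + hit_ever (metro H q \<beta>) escape_set low_targets x"
proof -
  interpret reversible_chain "metro H q \<beta>" "\<lambda>y. exp (- \<beta> * H y)"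
    using metro_reversible_chain[OF \<beta>] .
  define U where "U = - basin - A"
  have "A \<inter> U = {}" "A \<union> U = - basin" using basin_disjoint_A unfolding U_def by auto
  then have "hit (metro H q \<beta>) (- basin) {} n x = hit (metro H q \<beta>) A U n x + hit (metro H q \<beta>) U A n x"
    using hit_union_target[of A U "{}" n x] by simp
  moreover have "hit (metro H q \<beta>) A U n x \<le> hit (metro H q \<beta>) A {} n x"
    by (rule hit_mono_sets) auto
  moreover have "U \<subseteq> escape_set" "low_targets \<subseteq> A"
    unfolding U_def escape_set_def low_targets_def by auto
  then have "hit (metro H q \<beta>) U A n x \<le> hit_ever (metro H q \<beta>) escape_set low_targets x"
    by (intro order_trans[OF hit_le_hit_ever hit_ever_mono_sets])
  ultimately show ?thesis by linarith
qed

lemma prob_hit_after_le: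
  assumes \<beta>: "\<beta> \<ge> 0" and "T \<ge> 2"
    and K: "\<And>n. real n * (1 - hit (metro H q \<beta>) (- basin) {} n x) \<le> K * exp (\<beta> * Psi_max H q x A)"
  shows "prob_hit_after H q \<beta> A x T
    \<le> 2 * K * (exp (\<beta> * Psi_max H q x A) / T) + hit_ever (metro H q \<beta>) escape_set low_targets x"
proof -
  interpret reversible_chain "metro H q \<beta>" "\<lambda>y. exp (- \<beta> * H y)"
    using metro_reversible_chain[OF \<beta>] .
  define n where "n = nat \<lfloor>T\<rfloor>"
  have "T / 2 \<le> real n" using \<open>T \<ge> 2\<close> unfolding n_def by linarith
  then have "T / 2 * (1 - hit (metro H q \<beta>) (- basin) {} n x)
      \<le> real n * (1 - hit (metro H q \<beta>) (- basin) {} n x)"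
    using hit_le_one[of "- basin" "{}" n x] by (intro mult_right_mono) simp_all
  also have "\<dots> \<le> K * exp (\<beta> * Psi_max H q x A)" by (rule K)
  finally have "1 - hit (metro H q \<beta>) (- basin) {} n x \<le> 2 * K * (exp (\<beta> * Psi_max H q x A) / T)"
    using \<open>T \<ge> 2\<close> by (simp add: field_simps)
  then show ?thesis
    using survival_le_basin_survival_plus_escape[OF \<beta>, of n]
    unfolding prob_hit_after_def hit_le_eq_hit n_def by linarith
qed

lemma prob_hit_after_exp_small:
  assumes "\<epsilon> > 0"
  shows "exp_small (\<lambda>\<beta>. prob_hit_after H q \<beta> A x (exp (\<beta> * (Psi_max H q x A + \<epsilon>))))"
proof -
  obtain K where K: "\<And>\<beta> n. \<beta> \<ge> 0 \<Longrightarrow>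
      real n * (1 - hit (metro H q \<beta>) (- basin) {} n x) \<le> K * exp (\<beta> * Psi_max H q x A)"
    using mult_survival_in_basin_le by blast
  define T where "T \<beta> = exp (\<beta> * (Psi_max H q x A + \<epsilon>))" for \<beta>
  have "exp (\<beta> * Psi_max H q x A) / T \<beta> = exp (- \<beta> * \<epsilon>)" for \<beta>
    unfolding T_def by (simp add: exp_diff[symmetric] algebra_simps)
  then have bound: "prob_hit_after H q \<beta> A x (T \<beta>)
      \<le> 2 * K * exp (- \<beta> * \<epsilon>) + hit_ever (metro H q \<beta>) escape_set low_targets x"
    if "\<beta> \<ge> 0" "T \<beta> \<ge> 2" for \<beta>
    using prob_hit_after_le[OF that K[OF that(1)]] by simp
  have "\<forall>\<^sub>F \<beta> in at_top. ln 2 / (Psi_max H q x A + \<epsilon>) \<le> (\<beta>::real) \<and> 0 \<le> \<beta>"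
    by (intro eventually_conj eventually_ge_at_top)
  then have "\<forall>\<^sub>F \<beta> in at_top. prob_hit_after H q \<beta> A x (T \<beta>)
      \<le> 2 * K * exp (- \<beta> * \<epsilon>) + hit_ever (metro H q \<beta>) escape_set low_targets x"
  proof (rule eventually_mono)
    fix \<beta> :: real assume \<beta>: "ln 2 / (Psi_max H q x A + \<epsilon>) \<le> \<beta> \<and> 0 \<le> \<beta>"
    then have "ln 2 \<le> \<beta> * (Psi_max H q x A + \<epsilon>)"
      using Psi_max_nonneg assms by (simp add: field_simps)
    then have "exp (ln 2) \<le> T \<beta>" unfolding T_def by (subst exp_le_cancel_iff)
    with \<beta> bound show "prob_hit_after H q \<beta> A x (T \<beta>)
        \<le> 2 * K * exp (- \<beta> * \<epsilon>) + hit_ever (metro H q \<beta>) escape_set low_targets x"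
      by simp
  qed
  moreover have "exp_small (\<lambda>\<beta>. 2 * K * exp (- \<beta> * \<epsilon>) + hit_ever (metro H q \<beta>) escape_set low_targets x)"
    using assms by (intro exp_small_add exp_small_const_mult_exp escape_exp_small)
  ultimately show ?thesis unfolding T_def by (rule exp_small_le[rotated])
qed

end

theorem proposition3p10:
  fixes H :: "'a::finite \<Rightarrow> real" and q :: "'a \<Rightarrow> 'a \<Rightarrow> real"
    and A :: "'a set" and x :: 'a
  assumes q_range: "\<forall>u v. 0 \<le> q u v \<and> q u v \<le> 1"
    and q_stoch: "\<forall>u. (\<Sum>v\<in>UNIV. q u v) = 1"
    and q_sym: "\<forall>u v. q u v = q v u"
    and q_irred: "\<forall>u v. \<exists>\<omega>. path_from_to q \<omega> u v"
    and H_nonconst: "\<exists>u v. H u \<noteq> H v"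
    and A_ne: "A \<noteq> {}"
    and x_notin: "x \<notin> A"
    and A_conv: "\<forall>y. (\<forall>\<omega>. path_from_to q \<omega> x y \<longrightarrow> (\<exists>z\<in>set \<omega>. z \<in> A)) \<longrightarrow> y \<in> A"
  shows "\<forall>\<epsilon>>0. \<exists>\<kappa>>0. \<forall>\<^sub>F \<beta> in at_top.
           prob_hit_before H q \<beta> A x (exp (\<beta> * (Psi_min H q x A - \<epsilon>))) < exp (- \<kappa> * \<beta>)
         \<and> prob_hit_after H q \<beta> A x (exp (\<beta> * (Psi_max H q x A + \<epsilon>))) < exp (- \<kappa> * \<beta>)"
proof (intro allI impI)
  fix \<epsilon> :: real assume "\<epsilon> > 0"
  interpret hitting_problem H q A x
    by unfold_locales (use q_range q_stoch q_sym q_irred A_ne x_notin in auto)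
  show "\<exists>\<kappa>>0. \<forall>\<^sub>F \<beta> in at_top.
           prob_hit_before H q \<beta> A x (exp (\<beta> * (Psi_min H q x A - \<epsilon>))) < exp (- \<kappa> * \<beta>)
         \<and> prob_hit_after H q \<beta> A x (exp (\<beta> * (Psi_max H q x A + \<epsilon>))) < exp (- \<kappa> * \<beta>)"
    using exp_small_both_less_exp[OF prob_hit_before_exp_small prob_hit_after_exp_small] \<open>\<epsilon> > 0\<close> by blast
qed

end
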